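(* Let $S_{r,N}$ be an atomic exponential Puiseux semiring with $r\neq 1$. Then there exists $B\in\mathbb{N}$ such that for every $x\in S_{r,N}$ the set of lengths $\mathsf{L}(x)$ is an almost arithmetic progression with difference $|\mathsf{n}(r)-\mathsf{d}(r)|$ and bound $B$.
   Context: $\mathbb{N}=\{0,1,2,\dots\}$. A numerical monoid $N$ is an additive submonoid of $\mathbb{N}$ with finite complement in $\mathbb{N}$. For $r\in\mathbb{Q}_{>0}$ write $r=\mathsf{n}(r)/\mathsf{d}(r)$ with $\mathsf{n}(r),\mathsf{d}(r)$ coprime positive integers. The exponential Puiseux semiring $S_{r,N}$ is the additive submonoid of $\mathbb{Q}_{\ge0}$ generated by $\{r^k:k\in N\}$; if $r\in\mathbb{N}$ it equals $\mathbb{N}$; if $r\notin\mathbb{N}$ it is atomic iff $\mathsf{n}(r)>1$, with atoms $r^s$, $s\in N$. For an atomic monoid, $\mathsf{L}(x)$ is the set of lengths of factorizations of $x$ into atoms. For a positive integer $d$ and $B\in\mathbb{N}$, a set $L\subseteq\mathbb{Z}$ is an almost arithmetic progression (AAP) with difference $d$ and bound $B$ if $L=y+(L'\cup L^*\cup L'')\subseteq y+d\mathbb{Z}$ where $y\in\mathbb{Z}$, $L^*$ is a nonempty (possibly infinite) arithmetic progression with difference $d$ and $\min L^*=0$, $L'\subseteq[-B,-1]$, and $L''\subseteq\sup L^*+[1,B]$, with $L''=\emptyset$ if $L^*$ is infinite. *)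

theory Defs
  imports Complex_Main "HOL-Library.Multiset"
begin

definition numer :: "rat \<Rightarrow> int" where "numer r = fst (quotient_of r)"
definition denom :: "rat \<Rightarrow> int" where "denom r = snd (quotient_of r)"

definition numerical_monoid :: "nat set \<Rightarrow> bool" where
  "numerical_monoid N \<longleftrightarrow> 0 \<in> N \<and> (\<forall>a\<in>N. \<forall>b\<in>N. a + b \<in> N) \<and> finite (UNIV - N)"

definition gen_monoid :: "rat set \<Rightarrow> rat set" where
  "gen_monoid G = {sum_mset m | m. set_mset m \<subseteq> G}"

definition exp_puiseux :: "rat \<Rightarrow> nat set \<Rightarrow> rat set" where
  "exp_puiseux r N = gen_monoid {r ^ k | k. k \<in> N}"

text \<open>Atoms of a submonoid M of the nonnegative rationals (its only unit is 0).\<close>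
definition atoms :: "rat set \<Rightarrow> rat set" where
  "atoms M = {a \<in> M. a \<noteq> 0 \<and> (\<forall>b\<in>M. \<forall>c\<in>M. a = b + c \<longrightarrow> b = 0 \<or> c = 0)}"

definition atomic :: "rat set \<Rightarrow> bool" where
  "atomic M \<longleftrightarrow> (\<forall>x\<in>M. x \<noteq> 0 \<longrightarrow> (\<exists>m. set_mset m \<subseteq> atoms M \<and> sum_mset m = x))"

definition lengths :: "rat set \<Rightarrow> rat \<Rightarrow> nat set" where
  "lengths M x = {size m | m. set_mset m \<subseteq> atoms M \<and> sum_mset m = x}"

definition AAP :: "int \<Rightarrow> nat \<Rightarrow> int set \<Rightarrow> bool" where
  "AAP d B L \<longleftrightarrow> (\<exists>y L1 Ls L2.
     L = (\<lambda>z. y + z) ` (L1 \<union> Ls \<union> L2) \<and> (\<forall>z\<in>L. d dvd (z - y)) \<and>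
     L1 \<subseteq> {- int B .. -1} \<and>
     ((Ls = {d * int k | k. True} \<and> L2 = {}) \<or>
      (\<exists>n\<ge>1. Ls = {d * int k | k. k < n} \<and>
               L2 \<subseteq> {Max Ls + 1 .. Max Ls + int B})))"

end

theory Submission
  imports Defs "HOL-Library.Groups_Big_Fun" "HOL-Library.Infinite_Set"
begin

(* Write r = a / b in lowest terms. If b = 1 all sets of lengths are singletons, and if a = 1 the
   semiring is not atomic, so let a, b >= 2. The atoms are the powers r ^ e i, where e enumerates N,
   and a ^ g copies of atom i equal b ^ g copies of atom i + 1 for g = e (i + 1) - e i. Any two
   factorizations of x differ by an integer combination F of these trades, and the length changes
   by (a - b) times the weight sum_i w i * F i, where w i > 0 and w i = 1 from the index p on beyond
   which N has no gaps. Measured from a factorization of minimal length, L(x) is l0 + (a - b) * W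
   for a set W of weights of constant sign. Trades beyond p have weight 1 and fill intervals, while
   rearranging the trades at the finitely many indices up to p changes the weight only by a bounded
   amount. Hence for a > b the set W is an interval [0, Y] plus elements at most a constant above Y,
   and for a < b the set - W is bounded by a constant or contains a ray starting below it. *)

lemma zdiv_diff_le:
  fixes X Y B :: int
  assumes "1 \<le> B" "Y \<le> X"
  shows "X div B - Y div B \<le> X - Y"
proof -
  have "B * (X div B - Y div B) = (X - X mod B) - (Y - Y mod B)"
    by (simp add: algebra_simps minus_mod_eq_mult_div)
  also have "\<dots> < B * (X - Y + 1)"
  proof -
    have "0 \<le> X mod B" "Y mod B < B" using assms by simp_all
    moreover have "X - Y \<le> B * (X - Y)" using assms mult_right_mono[of 1 B "X - Y"] by simp
    ultimately show ?thesis by (simp add: algebra_simps)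
  qed
  finally show ?thesis using assms by (simp add: mult_less_cancel_left)
qed

lemma mult_zdiv_le:
  fixes X B :: int
  assumes "1 \<le> B"
  shows "B * (X div B) \<le> X"
  using assms pos_mod_sign[of B X] by (simp add: minus_mod_eq_mult_div[symmetric])

lemma le_zdiv:
  fixes X B g :: int
  assumes "1 \<le> B" "B * g \<le> X"
  shows "g \<le> X div B"
  using zdiv_mono1[OF assms(2), of B] assms(1) by simp

lemma le_mult_ceiling_div:
  fixes X B :: int
  assumes "1 \<le> B"
  shows "X \<le> B * ((X + B - 1) div B)"
proof -
  have "(X + B - 1) mod B < B" using assms by simp
  then show ?thesis by (simp add: minus_mod_eq_mult_div[symmetric])
qed

lemma ceiling_div_le:
  fixes X B g :: int
  assumes "1 \<le> B" "X \<le> B * g"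
  shows "(X + B - 1) div B \<le> g"
proof -
  have "(X + B - 1) div B \<le> (B * g + (B - 1)) div B" using assms by (intro zdiv_mono1) auto
  also have "\<dots> = g" using assms by simp
  finally show ?thesis .
qed

lemma atLeastAtMost_subset_insert:
  fixes x :: int
  assumes "{0..x - 1} \<subseteq> S" "x \<in> S"
  shows "{0..x} \<subseteq> S"
proof
  fix m assume "m \<in> {0..x}"
  then have "m \<in> {0..x - 1} \<or> m = x" by auto
  then show "m \<in> S" using assms by auto
qed

lemma atLeastAtMost_subset_split:
  fixes x y :: int
  assumes "{0..y} \<subseteq> S" "{y<..x} \<subseteq> S"
  shows "{0..x} \<subseteq> S"
proof
  fix m assume "m \<in> {0..x}"
  then have "m \<in> {0..y} \<or> m \<in> {y<..x}" by auto
  then show "m \<in> S" using assms by auto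
qed

section \<open>Trade vectors\<close>

definition eventually_zero :: "(nat \<Rightarrow> int) \<Rightarrow> bool" where
  "eventually_zero F \<longleftrightarrow> (\<exists>M. \<forall>i\<ge>M. F i = 0)"

definition weight :: "(nat \<Rightarrow> int) \<Rightarrow> (nat \<Rightarrow> int) \<Rightarrow> int" where
  "weight w F = Sum_any (\<lambda>i. w i * F i)"

definition inflow :: "(nat \<Rightarrow> int) \<Rightarrow> (nat \<Rightarrow> int) \<Rightarrow> nat \<Rightarrow> int" where
  "inflow B F i = (if i = 0 then 0 else B (i - 1) * F (i - 1))"

text \<open>A vector z counts how often each atom occurs in a factorization. One unit of F i trades
  B i copies of atom i+1 for A i copies of atom i, so exchange A B z F is the vector
  obtained from z by performing the trades F.\<close>

definition exchange ::
  "(nat \<Rightarrow> int) \<Rightarrow> (nat \<Rightarrow> int) \<Rightarrow> (nat \<Rightarrow> int) \<Rightarrow> (nat \<Rightarrow> int) \<Rightarrow> nat \<Rightarrow> int" where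
  "exchange A B z F i = z i + A i * F i - inflow B F i"

lemma eventually_zero_upd: "eventually_zero F \<Longrightarrow> eventually_zero (F(j := v))"
  unfolding eventually_zero_def by (metis fun_upd_apply le_trans nat_le_linear not_less_eq_eq)

lemma eventually_zero_min:
  "eventually_zero F \<Longrightarrow> eventually_zero G \<Longrightarrow> eventually_zero (\<lambda>i. min (F i) (G i))"
  unfolding eventually_zero_def by (metis min.idem le_trans nat_le_linear)

lemma eventually_zero_max:
  "eventually_zero F \<Longrightarrow> eventually_zero G \<Longrightarrow> eventually_zero (\<lambda>i. max (F i) (G i))"
  unfolding eventually_zero_def by (metis max.idem le_trans nat_le_linear)

lemma eventually_zero_uminus: "eventually_zero (\<lambda>i. - G i) \<longleftrightarrow> eventually_zero G"
  unfolding eventually_zero_def by simp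

lemma eventually_zero_zero [simp]: "eventually_zero (\<lambda>i. 0)"
  unfolding eventually_zero_def by simp

lemma weight_eq_sum:
  assumes "\<forall>i\<ge>M. F i = 0"
  shows "weight w F = (\<Sum>i<M. w i * F i)"
  unfolding weight_def
  by (rule Sum_any.expand_superset) (use assms in \<open>auto simp: not_less[symmetric]\<close>)

lemma weight_zero [simp]: "weight w (\<lambda>i. 0) = 0"
  unfolding weight_def by simp

lemma weight_upd:
  assumes "eventually_zero F"
  shows "weight w (F(j := v)) = weight w F + w j * (v - F j)"
proof -
  obtain M where M: "\<forall>i\<ge>M. F i = 0" using assms eventually_zero_def by auto
  define M' where "M' = max M (Suc j)"
  have M': "\<forall>i\<ge>M'. F i = 0" "\<forall>i\<ge>M'. (F(j := v)) i = 0" "j \<in> {..<M'}"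
    using M by (auto simp: M'_def)
  have "weight w (F(j := v)) = (\<Sum>i<M'. w i * F i + (if i = j then w j * (v - F j) else 0))"
    unfolding weight_eq_sum[OF M'(2)] by (rule sum.cong) (auto simp: algebra_simps)
  also have "\<dots> = weight w F + w j * (v - F j)"
    using M'(3) by (simp add: sum.distrib weight_eq_sum[OF M'(1)])
  finally show ?thesis .
qed

lemma weight_diff:
  assumes "eventually_zero F" "eventually_zero G" "\<forall>i>p. F i = G i"
  shows "weight w F - weight w G = (\<Sum>i\<le>p. w i * (F i - G i))"
proof -
  obtain M1 M2 where "\<forall>i\<ge>M1. F i = 0" "\<forall>i\<ge>M2. G i = 0"
    using assms(1,2) eventually_zero_def by auto
  then have "weight w F - weight w G = (\<Sum>i<max (max M1 M2) (Suc p). w i * (F i - G i))"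
    by (simp add: weight_eq_sum[of "max (max M1 M2) (Suc p)"] sum_subtractf algebra_simps)
  also have "\<dots> = (\<Sum>i\<le>p. w i * (F i - G i))"
    by (rule sum.mono_neutral_right) (use assms(3) in auto)
  finally show ?thesis .
qed

lemma weight_uminus:
  assumes "eventually_zero G"
  shows "weight w (\<lambda>i. - G i) = - weight w G"
proof -
  obtain M where "\<forall>i\<ge>M. G i = 0" using assms eventually_zero_def by auto
  then show ?thesis by (simp add: weight_eq_sum[of M] sum_negf)
qed

lemma weight_neg:
  assumes "eventually_zero F" "\<And>i. 1 \<le> w i" "\<And>i. F i \<le> 0" "F j < 0"
  shows "weight w F < 0"
proof -
  obtain M where M: "\<forall>i\<ge>M. F i = 0" using assms(1) eventually_zero_def by auto
  then have "j \<in> {..<M}" using assms(4) by (metis lessThan_iff linorder_not_le order_less_irrefl)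
  then have "weight w F = w j * F j + (\<Sum>i\<in>{..<M} - {j}. w i * F i)"
    by (simp add: weight_eq_sum[OF M] sum.remove)
  moreover have "(\<Sum>i\<in>{..<M} - {j}. w i * F i) \<le> 0"
    using assms(2,3) by (intro sum_nonpos) (simp add: mult_nonneg_nonpos order_trans[OF zero_le_one])
  moreover have "w j * F j < 0" using assms(2)[of j] assms(4) by (simp add: mult_pos_neg)
  ultimately show ?thesis by linarith
qed

lemma exchange_upd:
  "exchange A B z (F(j := v)) i = exchange A B z F i + (if i = j then A j * (v - F j) else 0)
    - (if i = Suc j then B j * (v - F j) else 0)"
  unfolding exchange_def inflow_def by (auto simp: algebra_simps)

lemma exchange_uminus:
  "exchange A B z (\<lambda>i. - G i) i = z i - A i * G i + inflow B G i"
  unfolding exchange_def inflow_def by simp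

section \<open>Exchange systems\<close>

locale exchange_system =
  fixes A B w :: "nat \<Rightarrow> int" and p :: nat and a b :: int
  assumes A_pos: "\<And>i. 1 \<le> A i" and B_pos: "\<And>i. 1 \<le> B i" and w_pos: "\<And>i. 1 \<le> w i"
    and A_tail: "\<And>i. p \<le> i \<Longrightarrow> A i = a" and B_tail: "\<And>i. p \<le> i \<Longrightarrow> B i = b"
    and w_tail: "\<And>i. p \<le> i \<Longrightarrow> w i = 1"
begin

lemma a_pos: "1 \<le> a"
  using A_pos[of p] A_tail[of p] by simp

lemma b_pos: "1 \<le> b"
  using B_pos[of p] B_tail[of p] by simp

definition feasible :: "(nat \<Rightarrow> int) \<Rightarrow> (nat \<Rightarrow> int) \<Rightarrow> bool" where
  "feasible z F \<longleftrightarrow> eventually_zero F \<and> (\<forall>i. 0 \<le> exchange A B z F i)"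

definition weights :: "(nat \<Rightarrow> int) \<Rightarrow> int set" where
  "weights z = weight w ` {F. feasible z F}"

lemma weightsI: "feasible z F \<Longrightarrow> weight w F \<in> weights z"
  unfolding weights_def by blast

lemma feasible_zero: "(\<And>i. 0 \<le> z i) \<Longrightarrow> feasible z (\<lambda>i. 0)"
  unfolding feasible_def exchange_def inflow_def by auto

lemma feasible_upd:
  "feasible z F \<Longrightarrow> (\<And>i. 0 \<le> exchange A B z (F(j := v)) i) \<Longrightarrow> feasible z (F(j := v))"
  unfolding feasible_def using eventually_zero_upd by auto

lemma inflow_le_exchange:
  assumes "feasible z F"
  shows "B i * F i \<le> z (Suc i) + A (Suc i) * F (Suc i)"
  using assms unfolding feasible_def exchange_def inflow_def by (auto dest: spec[of _ "Suc i"])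

text \<open>The feasible trade vectors form a lattice: at every index the constraint involves F i
  with a positive and F (i - 1) with a negative coefficient.\<close>

lemma feasible_min:
  assumes "feasible z F" "feasible z G"
  shows "feasible z (\<lambda>i. min (F i) (G i))"
  unfolding feasible_def
proof (intro conjI allI)
  show "eventually_zero (\<lambda>i. min (F i) (G i))"
    using assms eventually_zero_min unfolding feasible_def by auto
  fix i
  have "0 \<le> exchange A B z F i" "0 \<le> exchange A B z G i"
    using assms unfolding feasible_def by auto
  moreover have "inflow B (\<lambda>i. min (F i) (G i)) i \<le> inflow B H i" if "H = F \<or> H = G" for H
    using that B_pos[of "i - 1"] unfolding inflow_def by (auto intro!: mult_left_mono)
  ultimately show "0 \<le> exchange A B z (\<lambda>i. min (F i) (G i)) i"
    unfolding exchange_def by (cases "F i \<le> G i") (force simp: min_def)+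
qed

lemma feasible_max:
  assumes "feasible z F" "feasible z G"
  shows "feasible z (\<lambda>i. max (F i) (G i))"
  unfolding feasible_def
proof (intro conjI allI)
  show "eventually_zero (\<lambda>i. max (F i) (G i))"
    using assms eventually_zero_max unfolding feasible_def by auto
  fix i
  have "0 \<le> exchange A B z F i" "0 \<le> exchange A B z G i"
    using assms unfolding feasible_def by auto
  moreover have "A i * H i \<le> A i * max (F i) (G i)" if "H = F \<or> H = G" for H
    using that A_pos[of i] by (auto intro: mult_left_mono)
  ultimately show "0 \<le> exchange A B z (\<lambda>i. max (F i) (G i)) i"
    unfolding exchange_def inflow_def by (cases "i = 0 \<or> F (i - 1) \<le> G (i - 1)") (force simp: max_def)+
qed

definition head_weight :: int where
  "head_weight = sum w {..p}"

lemma w_le_head_weight: "j \<le> p \<Longrightarrow> w j \<le> head_weight"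
  unfolding head_weight_def
  by (rule member_le_sum) (use w_pos in \<open>auto intro: order_trans[OF zero_le_one]\<close>)

lemma head_weight_pos: "1 \<le> head_weight"
  using w_pos[of 0] w_le_head_weight[of 0] by simp

text \<open>head_bound k bounds how far the entry at index p - k is lowered when slack is created at
  p + 1, and bounds the entry itself when the top entry is below a * head_weight.\<close>

primrec head_bound :: "nat \<Rightarrow> int" where
  "head_bound 0 = a * head_weight"
| "head_bound (Suc k) = A (p - k) * (head_bound k + 1)"

lemma head_bound_nonneg: "0 \<le> head_bound k"
proof (induction k)
  case 0
  show ?case using a_pos head_weight_pos by simp
next
  case (Suc k)
  show ?case using Suc A_pos[of "p - k"] by simp
qed

definition overshoot_bound :: int where
  "overshoot_bound = (\<Sum>i\<le>p. w i * head_bound (p - i))"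

lemma overshoot_bound_nonneg: "0 \<le> overshoot_bound"
  unfolding overshoot_bound_def using w_pos head_bound_nonneg
  by (intro sum_nonneg) (auto intro: mult_nonneg_nonneg order_trans[OF zero_le_one])

end

section \<open>Weight sets of nonnegative weights\<close>

locale weights_nonneg = exchange_system +
  fixes z :: "nat \<Rightarrow> int"
  assumes z_nonneg: "\<And>i. 0 \<le> z i"
    and weight_nonneg: "\<And>F. feasible z F \<Longrightarrow> 0 \<le> weight w F"
begin

lemma zero_in_weights: "0 \<in> weights z"
  using weightsI[OF feasible_zero[OF z_nonneg]] by simp

lemma in_weights_nonneg: "l \<in> weights z \<Longrightarrow> 0 \<le> l"
  unfolding weights_def using weight_nonneg by auto

lemma feasible_nonneg:
  assumes "feasible z F"
  shows "0 \<le> F i"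
proof (rule ccontr)
  assume "\<not> 0 \<le> F i"
  have "feasible z (\<lambda>j. min (F j) 0)"
    using feasible_min[OF assms feasible_zero[OF z_nonneg]] by simp
  moreover have "weight w (\<lambda>j. min (F j) 0) < 0"
    using \<open>\<not> 0 \<le> F i\<close> assms w_pos
    by (intro weight_neg[where j = i]) (auto simp: feasible_def eventually_zero_min)
  ultimately show False using weight_nonneg by force
qed

lemma z_less_A: "z i < A i"
proof (rule ccontr)
  assume "\<not> z i < A i"
  have "feasible z ((\<lambda>j. 0)(i := -1))"
  proof (rule feasible_upd[OF feasible_zero[OF z_nonneg]])
    fix j
    show "0 \<le> exchange A B z ((\<lambda>j. 0)(i := -1)) j"
      using \<open>\<not> z i < A i\<close> z_nonneg[of j] B_pos[of i]
      by (auto simp: exchange_upd exchange_def inflow_def)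
  qed
  then show False using feasible_nonneg[of "(\<lambda>j. 0)(i := -1)" i] by simp
qed

lemma least_positive:
  assumes "feasible z F" "F i \<noteq> 0"
  obtains j where "j \<le> i" "0 < F j" "\<forall>k<j. F k = 0"
proof -
  define j where "j = (LEAST j. F j \<noteq> 0)"
  have "F j \<noteq> 0" "j \<le> i" "\<forall>k<j. F k = 0"
    using assms(2) LeastI[of "\<lambda>j. F j \<noteq> 0"] Least_le[of "\<lambda>j. F j \<noteq> 0"] not_less_Least
    unfolding j_def by blast+
  then show ?thesis using feasible_nonneg[OF assms(1), of j] that by force
qed

lemma feasible_decr_least:
  assumes "feasible z F" "0 < F j" "\<forall>k<j. F k = 0"
  shows "feasible z (F(j := F j - 1))"
proof (rule feasible_upd[OF assms(1)])
  fix i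
  have "0 \<le> exchange A B z F i" using assms(1) feasible_def by auto
  moreover have "A j * 1 \<le> A j * F j" using assms(2) A_pos[of j] by (intro mult_left_mono) auto
  then have "A j \<le> exchange A B z F j"
    using assms(3) z_nonneg[of j] by (cases j) (auto simp: exchange_def inflow_def)
  ultimately show "0 \<le> exchange A B z (F(j := F j - 1)) i"
    using B_pos[of j] by (auto simp: exchange_upd)
qed

lemma weight_decr: "feasible z F \<Longrightarrow> weight w (F(j := F j - t)) = weight w F - w j * t"
  using weight_upd[of F w j] unfolding feasible_def by simp

text \<open>Beyond the head every trade has weight 1, so undoing the lowest trade one unit at a time
  runs through all smaller weights.\<close>

lemma interval_in_weights_tail:
  assumes "feasible z F" "\<forall>i\<le>p. F i = 0"
  shows "{0..weight w F} \<subseteq> weights z"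
  using assms
proof (induction "nat (weight w F)" arbitrary: F)
  case 0
  then have "weight w F = 0" using weight_nonneg[of F] by simp
  then show ?case using weightsI[OF "0.prems"(1)] by auto
next
  case (Suc n)
  have "F \<noteq> (\<lambda>i. 0)" using Suc.hyps(2) by auto
  then obtain i where "F i \<noteq> 0" by auto
  then obtain j where j: "0 < F j" "\<forall>k<j. F k = 0" using least_positive[OF Suc.prems(1)] by blast
  have "p < j" using j(1) Suc.prems(2) by (metis less_irrefl not_le_imp_less)
  define F' where "F' = F(j := F j - 1)"
  have F': "feasible z F'" "\<forall>i\<le>p. F' i = 0"
    using feasible_decr_least[OF Suc.prems(1) j] Suc.prems(2) \<open>p < j\<close> by (auto simp: F'_def)
  have wF': "weight w F' = weight w F - 1"
    using weight_decr[OF Suc.prems(1), of j 1] w_tail[of j] \<open>p < j\<close> by (simp add: F'_def)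
  have "{0..weight w F'} \<subseteq> weights z"
    by (rule Suc.hyps(1)[OF _ F']) (use wF' Suc.hyps(2) in arith)
  moreover have "weight w F \<in> weights z" using weightsI[OF Suc.prems(1)] .
  ultimately show ?case using atLeastAtMost_subset_insert[of "weight w F" "weights z"] wF' by simp
qed

definition has_slack :: "(nat \<Rightarrow> int) \<Rightarrow> bool" where
  "has_slack F \<longleftrightarrow> a * head_weight \<le> exchange A B z F (Suc p)"

lemma slack_fills_gap:
  assumes "feasible z F" "has_slack F" "0 \<le> t" "t \<le> head_weight"
  shows "weight w F - t \<in> weights z"
proof -
  have "feasible z (F(Suc p := F (Suc p) - t))"
  proof (rule feasible_upd[OF assms(1)])
    fix i
    have "0 \<le> exchange A B z F i" using assms(1) feasible_def by auto
    moreover have "a * t \<le> a * head_weight" using assms(4) a_pos by (intro mult_left_mono) auto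
    then have "a * t \<le> exchange A B z F (Suc p)"
      using assms(2) unfolding has_slack_def by linarith
    moreover have "0 \<le> B (Suc p) * t" using B_pos[of "Suc p"] assms(3) by simp
    ultimately show "0 \<le> exchange A B z (F(Suc p := F (Suc p) - t)) i"
      using A_tail[of "Suc p"] by (auto simp: exchange_upd)
  qed
  moreover have "weight w (F(Suc p := F (Suc p) - t)) = weight w F - t"
    using weight_decr[OF assms(1), of "Suc p" t] w_tail[of "Suc p"] by simp
  ultimately show ?thesis using weightsI by metis
qed

text \<open>Removing a lowest head trade lowers the weight by at most head_weight, and the slack at
  p + 1 fills the resulting gap.\<close>

lemma interval_in_weights_slack:
  assumes "feasible z F" "has_slack F"
  shows "{0..weight w F} \<subseteq> weights z"
  using assms
proof (induction "nat (weight w F)" arbitrary: F rule: less_induct)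
  case less
  show ?case
  proof (cases "\<forall>i\<le>p. F i = 0")
    case True
    then show ?thesis using interval_in_weights_tail less.prems(1) by blast
  next
    case False
    then obtain i where "i \<le> p" "F i \<noteq> 0" by auto
    obtain j where "j \<le> i" "0 < F j" "\<forall>k<j. F k = 0"
      using least_positive[OF less.prems(1) \<open>F i \<noteq> 0\<close>] by blast
    with \<open>i \<le> p\<close> have j: "j \<le> p" "0 < F j" "\<forall>k<j. F k = 0" by auto
    define F' where "F' = F(j := F j - 1)"
    have "exchange A B z F (Suc p) \<le> exchange A B z F' (Suc p)"
      using j(1) B_pos[of j] by (simp add: F'_def exchange_upd)
    then have F': "feasible z F'" "has_slack F'"
      using feasible_decr_least[OF less.prems(1) j(2,3)] less.prems(2)
      unfolding F'_def has_slack_def by auto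
    have wF': "weight w F' = weight w F - w j"
      using weight_decr[OF less.prems(1), of j 1] by (simp add: F'_def)
    have "{0..weight w F'} \<subseteq> weights z"
      using less.hyps[OF _ F'] wF' w_pos[of j] weight_nonneg[OF F'(1)] by simp
    moreover have "{weight w F'<..weight w F} \<subseteq> weights z"
    proof
      fix m assume "m \<in> {weight w F'<..weight w F}"
      then have "0 \<le> weight w F - m" "weight w F - m \<le> head_weight"
        using wF' w_le_head_weight[OF j(1)] by auto
      from slack_fills_gap[OF less.prems this] show "m \<in> weights z" by simp
    qed
    ultimately show ?thesis by (rule atLeastAtMost_subset_split)
  qed
qed

text \<open>lowered F k is the new entry at index p - k: the top entry F p drops by a * head_weight,
  creating slack at p + 1, and every lower entry drops just as far as feasibility at the index
  above it demands.\<close>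

primrec lowered :: "(nat \<Rightarrow> int) \<Rightarrow> nat \<Rightarrow> int" where
  "lowered F 0 = F p - a * head_weight"
| "lowered F (Suc k) =
     min (F (p - Suc k)) ((z (p - k) + A (p - k) * lowered F k) div B (p - Suc k))"

definition lower :: "(nat \<Rightarrow> int) \<Rightarrow> nat \<Rightarrow> int" where
  "lower F i = (if i \<le> p then lowered F (p - i) else F i)"

lemma lowered_bounds:
  assumes "feasible z F" "a * head_weight \<le> F p" "k \<le> p"
  shows "0 \<le> lowered F k \<and> lowered F k \<le> F (p - k) \<and> F (p - k) - lowered F k \<le> head_bound k"
  using assms(3)
proof (induction k)
  case 0
  then show ?case using assms(2) a_pos head_weight_pos by simp
next
  case (Suc k)
  then have IH: "0 \<le> lowered F k" "lowered F k \<le> F (p - k)" "F (p - k) - lowered F k \<le> head_bound k"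
    by auto
  have idx: "Suc (p - Suc k) = p - k" using Suc.prems by simp
  define X where "X = z (p - k) + A (p - k) * lowered F k"
  define Y where "Y = z (p - k) + A (p - k) * F (p - k)"
  have "0 \<le> X" unfolding X_def using z_nonneg[of "p - k"] A_pos[of "p - k"] IH(1) by simp
  then have "0 \<le> X div B (p - Suc k)"
    using B_pos[of "p - Suc k"] pos_imp_zdiv_nonneg_iff[of "B (p - Suc k)" X] by simp
  have "X \<le> Y" unfolding X_def Y_def using IH(2) A_pos[of "p - k"] by (simp add: mult_left_mono)
  have "Y - X \<le> A (p - k) * head_bound k"
    unfolding X_def Y_def using IH(3) A_pos[of "p - k"] by (simp add: right_diff_distrib[symmetric] mult_left_mono)
  also have "\<dots> \<le> head_bound (Suc k)" using A_pos[of "p - k"] by simp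
  finally have "Y div B (p - Suc k) - X div B (p - Suc k) \<le> head_bound (Suc k)"
    using zdiv_diff_le[OF B_pos[of "p - Suc k"] \<open>X \<le> Y\<close>] by linarith
  moreover have "F (p - Suc k) \<le> Y div B (p - Suc k)"
    using inflow_le_exchange[OF assms(1), of "p - Suc k"] B_pos unfolding idx Y_def by (intro le_zdiv)
  moreover have "0 \<le> F (p - Suc k)" by (rule feasible_nonneg[OF assms(1)])
  ultimately show ?case
    using \<open>0 \<le> X div B (p - Suc k)\<close> head_bound_nonneg[of "Suc k"] by (auto simp: X_def min_def)
qed

lemma lower_bounds:
  assumes "feasible z F" "a * head_weight \<le> F p" "i \<le> p"
  shows "0 \<le> lower F i" "lower F i \<le> F i" "F i - lower F i \<le> head_bound (p - i)"
  using lowered_bounds[OF assms(1,2), of "p - i"] assms(3) by (simp_all add: lower_def)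

lemma exchange_lower_Suc_p:
  "exchange A B z (lower F) (Suc p) = exchange A B z F (Suc p) + b * (a * head_weight)"
  unfolding exchange_def inflow_def lower_def using B_tail[of p] by (simp add: algebra_simps)

lemma feasible_lower:
  assumes "feasible z F" "a * head_weight \<le> F p"
  shows "feasible z (lower F)"
  unfolding feasible_def
proof (intro conjI allI)
  obtain M where "\<forall>i\<ge>M. F i = 0" using assms(1) unfolding feasible_def eventually_zero_def by auto
  then have "\<forall>i\<ge>max M (Suc p). lower F i = 0" by (auto simp: lower_def)
  then show "eventually_zero (lower F)" unfolding eventually_zero_def by blast
  fix i
  have exF: "0 \<le> exchange A B z F i" for i using assms(1) feasible_def by auto
  consider "i = 0" | j where "i = Suc j" "i \<le> p" | "i = Suc p" | "Suc p < i" by (cases i) force+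
  then show "0 \<le> exchange A B z (lower F) i"
  proof cases
    case 1
    then show ?thesis using lower_bounds(1)[OF assms, of 0] z_nonneg[of 0] A_pos[of 0]
      by (simp add: exchange_def inflow_def)
  next
    case (2 j)
    have idx: "p - j = Suc (p - i)" "p - (p - i) = i" "p - Suc (p - i) = j" using 2 by auto
    have "lowered F (Suc (p - i)) \<le>
        (z (p - (p - i)) + A (p - (p - i)) * lowered F (p - i)) div B (p - Suc (p - i))"
      by simp
    then have "lower F j \<le> (z i + A i * lower F i) div B j"
      using 2 unfolding idx by (simp add: lower_def idx)
    then have "B j * lower F j \<le> z i + A i * lower F i"
      using mult_zdiv_le[OF B_pos[of j]] B_pos[of j] by (meson mult_left_mono order_trans zero_le_one)
    then show ?thesis using 2 by (simp add: exchange_def inflow_def)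
  next
    case 3
    then show ?thesis
      using exchange_lower_Suc_p[of F] exF[of "Suc p"] b_pos a_pos head_weight_pos by simp
  next
    case 4
    then have "exchange A B z (lower F) i = exchange A B z F i"
      unfolding exchange_def inflow_def lower_def by auto
    then show ?thesis using exF by simp
  qed
qed

lemma has_slack_lower:
  assumes "feasible z F"
  shows "has_slack (lower F)"
proof -
  have "a * head_weight \<le> b * (a * head_weight)"
    using mult_right_mono[of 1 b "a * head_weight"] b_pos a_pos head_weight_pos by simp
  moreover have "0 \<le> exchange A B z F (Suc p)" using assms feasible_def by auto
  ultimately show ?thesis unfolding has_slack_def exchange_lower_Suc_p by linarith
qed

lemma weight_lower:
  assumes "feasible z F" "a * head_weight \<le> F p"
  shows "weight w F - weight w (lower F) \<le> overshoot_bound"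
proof -
  have "eventually_zero F" "eventually_zero (lower F)"
    using assms(1) feasible_lower[OF assms] unfolding feasible_def by auto
  then have "weight w F - weight w (lower F) = (\<Sum>i\<le>p. w i * (F i - lower F i))"
    by (rule weight_diff) (simp add: lower_def)
  also have "\<dots> \<le> overshoot_bound"
    unfolding overshoot_bound_def using lower_bounds(3)[OF assms] w_pos
    by (intro sum_mono mult_left_mono) (auto intro: order_trans[OF zero_le_one])
  finally show ?thesis .
qed

lemma head_entry_le_head_bound:
  assumes "feasible z F" "F p < a * head_weight" "k \<le> p"
  shows "F (p - k) \<le> head_bound k"
  using assms(3)
proof (induction k)
  case 0
  then show ?case using assms(2) by simp
next
  case (Suc k)
  have idx: "Suc (p - Suc k) = p - k" using Suc.prems by simp
  have "B (p - Suc k) * F (p - Suc k) \<le> z (p - k) + A (p - k) * F (p - k)"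
    using inflow_le_exchange[OF assms(1), of "p - Suc k"] unfolding idx .
  moreover have "F (p - Suc k) \<le> B (p - Suc k) * F (p - Suc k)"
    using feasible_nonneg[OF assms(1)] B_pos mult_right_mono[of 1 "B (p - Suc k)" "F (p - Suc k)"]
    by simp
  moreover have "A (p - k) * F (p - k) \<le> A (p - k) * head_bound k"
    using Suc A_pos[of "p - k"] by (intro mult_left_mono) auto
  ultimately show ?case using z_less_A[of "p - k"] by (simp add: algebra_simps)
qed

definition clear_head :: "(nat \<Rightarrow> int) \<Rightarrow> nat \<Rightarrow> int" where
  "clear_head F i = (if i \<le> p then 0 else F i)"

lemma feasible_clear_head:
  assumes "feasible z F"
  shows "feasible z (clear_head F)"
  unfolding feasible_def
proof (intro conjI allI)
  obtain M where "\<forall>i\<ge>M. F i = 0" using assms unfolding feasible_def eventually_zero_def by auto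
  then show "eventually_zero (clear_head F)" unfolding eventually_zero_def clear_head_def by auto
  fix i
  have exF: "0 \<le> exchange A B z F i" using assms feasible_def by auto
  consider "i \<le> p" | "i = Suc p" | "Suc p < i" by linarith
  then show "0 \<le> exchange A B z (clear_head F) i"
  proof cases
    case 1
    then show ?thesis using z_nonneg[of i] by (auto simp: exchange_def inflow_def clear_head_def)
  next
    case 2
    have "0 \<le> B p * F p" using B_pos[of p] feasible_nonneg[OF assms, of p] by simp
    then show ?thesis using 2 exF by (simp add: exchange_def inflow_def clear_head_def)
  next
    case 3
    then show ?thesis using exF by (auto simp: exchange_def inflow_def clear_head_def)
  qed
qed

lemma weight_clear_head:
  assumes "feasible z F" "F p < a * head_weight"
  shows "weight w F - weight w (clear_head F) \<le> overshoot_bound"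
proof -
  have "eventually_zero F" "eventually_zero (clear_head F)"
    using assms(1) feasible_clear_head[OF assms(1)] unfolding feasible_def by auto
  then have "weight w F - weight w (clear_head F) = (\<Sum>i\<le>p. w i * (F i - clear_head F i))"
    by (rule weight_diff) (simp add: clear_head_def)
  also have "\<dots> = (\<Sum>i\<le>p. w i * F i)" by (simp add: clear_head_def)
  also have "\<dots> \<le> overshoot_bound"
  proof -
    have "F i \<le> head_bound (p - i)" if "i \<le> p" for i
      using head_entry_le_head_bound[OF assms, of "p - i"] that by simp
    then show ?thesis
      unfolding overshoot_bound_def using w_pos
      by (intro sum_mono mult_left_mono) (auto intro: order_trans[OF zero_le_one])
  qed
  finally show ?thesis .
qed

lemma feasible_close_to_interval:
  assumes "feasible z F"
  obtains F' where "weight w F - overshoot_bound \<le> weight w F'" "{0..weight w F'} \<subseteq> weights z"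
proof (cases "a * head_weight \<le> F p")
  case True
  then show ?thesis
    using that interval_in_weights_slack[OF feasible_lower has_slack_lower] weight_lower assms
    by (metis diff_le_eq add.commute)
next
  case False
  then show ?thesis
    using that interval_in_weights_tail[OF feasible_clear_head] weight_clear_head assms
    by (metis clear_head_def diff_le_eq add.commute not_le)
qed

theorem weights_interval_cases:
  "{0..} \<subseteq> weights z \<or> (\<exists>Y\<ge>0. {0..Y} \<subseteq> weights z \<and> weights z \<subseteq> {0..Y + overshoot_bound})"
proof (cases "{0..} \<subseteq> weights z")
  case False
  then obtain n :: nat where "int n \<notin> weights z" by (metis atLeast_iff nonneg_int_cases subsetI)
  define m where "m = (LEAST n. int n \<notin> weights z)"
  have m: "int m \<notin> weights z" "\<And>k. k < m \<Longrightarrow> int k \<in> weights z"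
    using LeastI[of "\<lambda>n. int n \<notin> weights z", OF \<open>int n \<notin> weights z\<close>] not_less_Least
    unfolding m_def by blast+
  have "1 \<le> m" using m(1) zero_in_weights by (cases m) auto
  have "{0..int m - 1} \<subseteq> weights z"
  proof
    fix l assume "l \<in> {0..int m - 1}"
    then show "l \<in> weights z" using m(2)[of "nat l"] by (simp add: nat_less_iff)
  qed
  moreover have "weights z \<subseteq> {0..int m - 1 + overshoot_bound}"
  proof
    fix l assume "l \<in> weights z"
    then obtain F where F: "feasible z F" "l = weight w F" unfolding weights_def by auto
    obtain F' where F': "weight w F - overshoot_bound \<le> weight w F'" "{0..weight w F'} \<subseteq> weights z"
      using feasible_close_to_interval[OF F(1)] by blast
    have "weight w F' < int m" using F'(2) m(1) by (meson atLeastAtMost_iff not_le of_nat_0_le_iff subsetD)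
    then show "l \<in> {0..int m - 1 + overshoot_bound}"
      using F F' in_weights_nonneg \<open>l \<in> weights z\<close> by auto
  qed
  ultimately show ?thesis using \<open>1 \<le> m\<close> by (intro disjI2 exI[of _ "int m - 1"]) auto
qed simp

end

section \<open>Weight sets of nonpositive weights\<close>

locale exchange_system_lt = exchange_system +
  assumes a_less_b: "a < b" and b_le_B: "\<And>i. b \<le> B i" and p_pos: "1 \<le> p"
begin

definition q :: nat where
  "q = p - 1"

lemma Suc_q: "Suc q = p"
  using p_pos by (simp add: q_def)

primrec forced_bound :: "nat \<Rightarrow> int" where
  "forced_bound 0 = 1"
| "forced_bound (Suc k) = A (q - k) * forced_bound k"

definition threshold_bound :: int where
  "threshold_bound = (\<Sum>i\<le>q. w i * forced_bound (q - i))"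

lemma forced_bound_nonneg: "0 \<le> forced_bound k"
proof (induction k)
  case (Suc k)
  then show ?case using A_pos[of "q - k"] by simp
qed simp

lemma threshold_bound_nonneg: "0 \<le> threshold_bound"
  unfolding threshold_bound_def using w_pos forced_bound_nonneg
  by (intro sum_nonneg) (auto intro: mult_nonneg_nonneg order_trans[OF zero_le_one])

end

locale weights_nonpos = exchange_system_lt +
  fixes z :: "nat \<Rightarrow> int"
  assumes z_nonneg: "\<And>i. 0 \<le> z i"
    and weight_nonpos: "\<And>F. feasible z F \<Longrightarrow> weight w F \<le> 0"
begin

text \<open>Here the trades are reversed: one unit of G i trades A i copies of atom i for B i copies
  of atom i + 1, which lengthens the factorization.\<close>

definition rev_exchange :: "(nat \<Rightarrow> int) \<Rightarrow> nat \<Rightarrow> int" where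
  "rev_exchange G i = z i - A i * G i + inflow B G i"

definition rev_feasible :: "(nat \<Rightarrow> int) \<Rightarrow> bool" where
  "rev_feasible G \<longleftrightarrow> eventually_zero G \<and> (\<forall>i. 0 \<le> rev_exchange G i)"

definition rev_weights :: "int set" where
  "rev_weights = weight w ` {G. rev_feasible G}"

lemma rev_feasible_iff: "rev_feasible G \<longleftrightarrow> feasible z (\<lambda>i. - G i)"
  unfolding rev_feasible_def feasible_def rev_exchange_def exchange_uminus eventually_zero_uminus ..

lemma weights_eq_uminus_rev_weights: "weights z = uminus ` rev_weights"
proof -
  have "{F. feasible z F} = (\<lambda>G i. - G i) ` {G. rev_feasible G}"
  proof (intro equalityI subsetI)
    fix F assume "F \<in> {F. feasible z F}"
    then show "F \<in> (\<lambda>G i. - G i) ` {G. rev_feasible G}"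
      by (intro image_eqI[of _ _ "\<lambda>i. - F i"]) (auto simp: rev_feasible_iff)
  qed (auto simp: rev_feasible_iff)
  then have "weights z = weight w ` (\<lambda>G i. - G i) ` {G. rev_feasible G}"
    unfolding weights_def by simp
  also have "\<dots> = uminus ` rev_weights"
    unfolding rev_weights_def image_image rev_feasible_def by (auto simp: weight_uminus)
  finally show ?thesis .
qed

lemma rev_weightsI: "rev_feasible G \<Longrightarrow> weight w G \<in> rev_weights"
  unfolding rev_weights_def by blast

lemma weight_rev_nonneg: "rev_feasible G \<Longrightarrow> 0 \<le> weight w G"
  using weight_nonpos[of "\<lambda>i. - G i"] weight_uminus[of G w]
  unfolding rev_feasible_iff by (simp add: rev_feasible_def rev_feasible_iff[symmetric])

lemma in_rev_weights_nonneg: "l \<in> rev_weights \<Longrightarrow> 0 \<le> l"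
  unfolding rev_weights_def using weight_rev_nonneg by auto

lemma rev_exchange_zero [simp]: "rev_exchange (\<lambda>i. 0) i = z i"
  unfolding rev_exchange_def inflow_def by simp

lemma rev_feasible_zero: "rev_feasible (\<lambda>i. 0)"
  using z_nonneg unfolding rev_feasible_def rev_exchange_def inflow_def by simp

lemma rev_exchange_upd:
  "rev_exchange (G(j := v)) i = rev_exchange G i - (if i = j then A j * (v - G j) else 0)
    + (if i = Suc j then B j * (v - G j) else 0)"
  unfolding rev_exchange_def inflow_def by (auto simp: algebra_simps)

lemma rev_feasible_upd:
  "rev_feasible G \<Longrightarrow> (\<And>i. 0 \<le> rev_exchange (G(j := v)) i) \<Longrightarrow> rev_feasible (G(j := v))"
  unfolding rev_feasible_def using eventually_zero_upd by auto

lemma rev_feasible_nonneg: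
  assumes "rev_feasible G"
  shows "0 \<le> G i"
proof (rule ccontr)
  assume "\<not> 0 \<le> G i"
  have "feasible z (\<lambda>j. max (- G j) 0)"
    using feasible_max[OF assms[unfolded rev_feasible_iff] feasible_zero[OF z_nonneg]] by simp
  moreover have "(\<lambda>j. - min (G j) 0) = (\<lambda>j. max (- G j) 0)"
    by (auto simp: fun_eq_iff min_def max_def)
  ultimately have "rev_feasible (\<lambda>j. min (G j) 0)"
    unfolding rev_feasible_iff by simp
  moreover have "weight w (\<lambda>j. min (G j) 0) < 0"
    using \<open>\<not> 0 \<le> G i\<close> assms w_pos
    by (intro weight_neg[where j = i]) (auto simp: rev_feasible_def eventually_zero_min)
  ultimately show False using weight_rev_nonneg by force
qed

lemma rev_feasible_exchange:
  "rev_feasible G \<Longrightarrow> 0 \<le> z i - A i * G i + inflow B G i"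
  unfolding rev_feasible_def rev_exchange_def by blast

definition has_room :: "(nat \<Rightarrow> int) \<Rightarrow> bool" where
  "has_room G \<longleftrightarrow> (\<exists>j\<ge>p. a \<le> rev_exchange G j)"

text \<open>Room at a tail index j allows one more trade there, of weight 1; it passes the room on to
  index j + 1, because b > a.\<close>

lemma push_room:
  assumes "rev_feasible G" "p \<le> j" "a \<le> rev_exchange G j"
  shows "\<exists>G'. rev_feasible G' \<and> weight w G' = weight w G + int t \<and> a \<le> rev_exchange G' (j + t)"
proof (induction t)
  case 0
  then show ?case using assms by auto
next
  case (Suc t)
  then obtain G' where G': "rev_feasible G'" "weight w G' = weight w G + int t"
    "a \<le> rev_exchange G' (j + t)" by auto
  define G'' where "G'' = G'(j + t := G' (j + t) + 1)"
  have ex: "0 \<le> rev_exchange G' i" for i using G'(1) rev_feasible_def by auto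
  have tail: "A (j + t) = a" "B (j + t) = b" "w (j + t) = 1"
    using assms(2) A_tail B_tail w_tail by auto
  have "rev_feasible G''"
    unfolding G''_def
  proof (rule rev_feasible_upd[OF G'(1)])
    fix i
    show "0 \<le> rev_exchange (G'(j + t := G' (j + t) + 1)) i"
      using G'(3) ex[of i] tail b_pos by (auto simp: rev_exchange_upd)
  qed
  moreover have "weight w G'' = weight w G + int (Suc t)"
    unfolding G''_def using weight_upd[of G' w "j + t"] G'(1,2) tail
    unfolding rev_feasible_def by simp
  moreover have "a \<le> rev_exchange G'' (j + Suc t)"
    using ex[of "Suc (j + t)"] tail a_less_b unfolding G''_def by (simp add: rev_exchange_upd)
  ultimately show ?case by blast
qed

lemma up_set_in_rev_weights:
  assumes "rev_feasible G" "has_room G"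
  shows "{weight w G..} \<subseteq> rev_weights"
proof
  fix n assume "n \<in> {weight w G..}"
  obtain j where "p \<le> j" "a \<le> rev_exchange G j" using assms(2) has_room_def by auto
  from push_room[OF assms(1) this, of "nat (n - weight w G)"] \<open>n \<in> {weight w G..}\<close>
  show "n \<in> rev_weights" using rev_weightsI by force
qed

lemma no_room_tail:
  assumes "rev_feasible G" "\<not> has_room G" "p \<le> j"
  shows "G j = 0"
proof (rule ccontr)
  assume "G j \<noteq> 0"
  define S where "S = {l. p \<le> l \<and> G l \<noteq> 0}"
  obtain M where "\<forall>i\<ge>M. G i = 0" using assms(1) unfolding rev_feasible_def eventually_zero_def by auto
  then have "S \<subseteq> {..<M}" unfolding S_def using not_le by blast
  then have "finite S" by (rule finite_subset) simp
  moreover have "j \<in> S" using \<open>G j \<noteq> 0\<close> assms(3) by (simp add: S_def)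
  ultimately have "Max S \<in> S" by (intro Max_in) auto
  have "G (Suc (Max S)) = 0"
  proof (rule ccontr)
    assume "G (Suc (Max S)) \<noteq> 0"
    then have "Suc (Max S) \<in> S" using \<open>Max S \<in> S\<close> by (simp add: S_def)
    then show False using Max_ge[OF \<open>finite S\<close>] by fastforce
  qed
  note l = \<open>Max S \<in> S\<close> this
  have "1 \<le> G (Max S)" using rev_feasible_nonneg[OF assms(1), of "Max S"] l(1) by (simp add: S_def)
  then have "b \<le> b * G (Max S)" using b_pos mult_left_mono[of 1 "G (Max S)" b] by simp
  then have "a \<le> rev_exchange G (Suc (Max S))"
    using l B_tail[of "Max S"] z_nonneg[of "Suc (Max S)"] a_less_b
    by (simp add: rev_exchange_def inflow_def S_def)
  then have "has_room G" using l(1) unfolding has_room_def S_def by (auto intro: le_SucI)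
  with assms(2) show False by simp
qed

lemma has_room_top:
  assumes "rev_feasible G" "1 \<le> G q"
  shows "has_room G"
proof (rule ccontr)
  assume "\<not> has_room G"
  then have "G p = 0" using no_room_tail[OF assms(1)] by simp
  then have "rev_exchange G p = z p + B q * G q"
    using Suc_q by (auto simp: rev_exchange_def inflow_def q_def)
  moreover have "B q \<le> B q * G q" using assms(2) B_pos[of q] mult_left_mono[of 1 "G q" "B q"] by simp
  ultimately have "a \<le> rev_exchange G p" using z_nonneg[of p] b_le_B[of q] a_less_b by simp
  with \<open>\<not> has_room G\<close> show False unfolding has_room_def by auto
qed

lemma top_of_has_room:
  assumes "rev_feasible G" "has_room G" "\<not> has_room (\<lambda>i. 0)"
  shows "1 \<le> G q"
proof (rule ccontr)
  assume "\<not> 1 \<le> G q"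
  then have "G q = 0" using rev_feasible_nonneg[OF assms(1), of q] by simp
  have z_room: "z l < a" if "p \<le> l" for l
  proof -
    have "\<not> a \<le> rev_exchange (\<lambda>i. 0) l" using assms(3) that unfolding has_room_def by blast
    then show ?thesis by simp
  qed
  have step: "G l = 0" if l: "p \<le> l" "G (l - 1) = 0" for l
  proof (rule ccontr)
    assume "G l \<noteq> 0"
    then have "1 \<le> G l" using rev_feasible_nonneg[OF assms(1), of l] by simp
    then have "a \<le> a * G l" using a_pos mult_left_mono[of 1 "G l" a] by simp
    moreover have "0 \<le> z l - a * G l"
      using rev_feasible_exchange[OF assms(1), of l] l A_tail[OF l(1)] p_pos
      by (auto simp: inflow_def)
    ultimately show False using z_room[OF l(1)] by simp
  qed
  have tail: "G l = 0" if "p \<le> l" for l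
    using that
  proof (induction l rule: nat_induct_at_least)
    case base
    then show ?case using step[of p] \<open>G q = 0\<close> by (simp add: q_def)
  next
    case (Suc l)
    then show ?case using step[of "Suc l"] by simp
  qed
  obtain j where j: "p \<le> j" "a \<le> rev_exchange G j" using assms(2) has_room_def by auto
  moreover have "G (j - 1) = 0"
    using tail \<open>G q = 0\<close> j(1) by (cases "j = p") (auto simp: q_def)
  ultimately show False
    using tail[OF j(1)] z_room[OF j(1)] p_pos by (auto simp: rev_exchange_def inflow_def)
qed

text \<open>forced k bounds G (q - k) from below for every reversely feasible G with G q \<ge> 1: each
  trade at index q - k uses A (q - k) copies of atom q - k, and those not present in z must be
  produced by trades at index q - k - 1.\<close>

primrec forced :: "nat \<Rightarrow> int" where
  "forced 0 = 1"
| "forced (Suc k) =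
     (max 0 (A (q - k) * forced k - z (q - k)) + B (q - Suc k) - 1) div B (q - Suc k)"

lemma forced_bounds: "0 \<le> forced k \<and> forced k \<le> forced_bound k"
proof (induction k)
  case 0
  then show ?case by simp
next
  case (Suc k)
  define X where "X = max 0 (A (q - k) * forced k - z (q - k))"
  have "0 \<le> X" unfolding X_def by simp
  have "A (q - k) * forced k \<le> A (q - k) * forced_bound k"
    using Suc A_pos[of "q - k"] by (intro mult_left_mono) auto
  moreover have "0 \<le> A (q - k) * forced_bound k"
    using forced_bound_nonneg[of k] A_pos[of "q - k"] by simp
  ultimately have "X \<le> A (q - k) * forced_bound k"
    unfolding X_def using z_nonneg[of "q - k"] by linarith
  moreover have "(X + B (q - Suc k) - 1) div B (q - Suc k) \<le> X"
    using \<open>0 \<le> X\<close> B_pos[of "q - Suc k"] mult_right_mono[of 1 "B (q - Suc k)" X]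
    by (intro ceiling_div_le) auto
  moreover have "0 \<le> (X + B (q - Suc k) - 1) div B (q - Suc k)"
    using \<open>0 \<le> X\<close> B_pos[of "q - Suc k"] by (simp add: pos_imp_zdiv_nonneg_iff)
  moreover have "forced (Suc k) = (X + B (q - Suc k) - 1) div B (q - Suc k)"
    by (simp add: X_def)
  ultimately show ?case by simp
qed

lemma forced_step: "A (q - k) * forced k - z (q - k) \<le> B (q - Suc k) * forced (Suc k)"
  using le_mult_ceiling_div[OF B_pos, of "max 0 (A (q - k) * forced k - z (q - k))" "q - Suc k"]
  by simp

lemma forced_le:
  assumes "rev_feasible G" "1 \<le> G q" "k \<le> q"
  shows "forced k \<le> G (q - k)"
  using assms(3)
proof (induction k)
  case 0
  then show ?case using assms(2) by simp
next
  case (Suc k)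
  have idx: "Suc (q - Suc k) = q - k" using Suc.prems by simp
  have "A (q - k) * forced k \<le> A (q - k) * G (q - k)"
    using Suc A_pos[of "q - k"] by (intro mult_left_mono) auto
  then have "A (q - k) * forced k - z (q - k) \<le> B (q - Suc k) * G (q - Suc k)"
    using rev_feasible_exchange[OF assms(1), of "q - k"] idx[symmetric]
    by (simp add: inflow_def)
  moreover have "0 \<le> B (q - Suc k) * G (q - Suc k)"
    using rev_feasible_nonneg[OF assms(1)] B_pos[of "q - Suc k"] by simp
  ultimately show ?case by (simp add: ceiling_div_le[OF B_pos])
qed

definition forced_vector :: "nat \<Rightarrow> int" where
  "forced_vector i = (if i \<le> q then forced (q - i) else 0)"

lemma forced_vector_step:
  assumes "1 \<le> l" "l \<le> q"
  shows "0 \<le> z l - A l * forced_vector l + B (l - 1) * forced_vector (l - 1)"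
proof -
  have idx: "q - (l - 1) = Suc (q - l)" "q - (q - l) = l" "q - Suc (q - l) = l - 1"
    using assms by arith+
  have "l - 1 \<le> q" using assms by simp
  then show ?thesis
    using forced_step[of "q - l"] assms unfolding forced_vector_def idx by simp
qed

lemma eventually_zero_forced_vector: "eventually_zero forced_vector"
  unfolding eventually_zero_def forced_vector_def using Suc_q by (intro exI[of _ p]) auto

lemma rev_feasible_forced_vector:
  assumes "rev_feasible G" "1 \<le> G q"
  shows "rev_feasible forced_vector"
  unfolding rev_feasible_def
proof (intro conjI allI)
  show "eventually_zero forced_vector" by (rule eventually_zero_forced_vector)
  fix l
  consider "l = 0" | "1 \<le> l" "l \<le> q" | "l = p" | "p < l" using Suc_q by linarith
  then show "0 \<le> rev_exchange forced_vector l"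
  proof cases
    case 1
    have "A 0 * forced_vector 0 \<le> A 0 * G 0"
      using forced_le[OF assms, of q] A_pos[of 0] by (intro mult_left_mono) (auto simp: forced_vector_def)
    then show ?thesis
      using rev_feasible_exchange[OF assms(1), of 0] 1 by (simp add: rev_exchange_def inflow_def)
  next
    case 2
    then show ?thesis using forced_vector_step by (simp add: rev_exchange_def inflow_def)
  next
    case 3
    then show ?thesis using z_nonneg[of p] B_pos[of q] Suc_q
      by (auto simp: rev_exchange_def inflow_def forced_vector_def q_def)
  next
    case 4
    then show ?thesis using z_nonneg[of l] Suc_q
      by (auto simp: rev_exchange_def inflow_def forced_vector_def)
  qed
qed

lemma has_room_forced_vector: "has_room forced_vector"
proof -
  have "rev_exchange forced_vector p = z p + B q"
    using Suc_q by (auto simp: rev_exchange_def inflow_def forced_vector_def q_def)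
  then have "a \<le> rev_exchange forced_vector p"
    using z_nonneg[of p] b_le_B[of q] a_less_b by simp
  then show ?thesis unfolding has_room_def by auto
qed

lemma weight_le_threshold:
  assumes "eventually_zero G" "\<And>i. p \<le> i \<Longrightarrow> G i = 0" "\<And>i. i \<le> q \<Longrightarrow> G i \<le> forced_bound (q - i)"
  shows "weight w G \<le> threshold_bound"
proof -
  have "weight w G = (\<Sum>i<p. w i * G i)"
    using assms(2) by (intro weight_eq_sum) auto
  also have "\<dots> = (\<Sum>i\<le>q. w i * G i)"
    using Suc_q lessThan_Suc_atMost[of q] by simp
  also have "\<dots> \<le> threshold_bound"
    unfolding threshold_bound_def using assms(3) w_pos
    by (intro sum_mono mult_left_mono) (auto intro: order_trans[OF zero_le_one])
  finally show ?thesis .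
qed

lemma weight_forced_vector: "weight w forced_vector \<le> threshold_bound"
proof (rule weight_le_threshold[OF eventually_zero_forced_vector])
  show "forced_vector i = 0" if "p \<le> i" for i
    using that Suc_q by (simp add: forced_vector_def)
  show "forced_vector i \<le> forced_bound (q - i)" if "i \<le> q" for i
    using that forced_bounds[of "q - i"] by (simp add: forced_vector_def)
qed

definition raise_above :: "nat \<Rightarrow> (nat \<Rightarrow> int) \<Rightarrow> nat \<Rightarrow> int" where
  "raise_above i G j = (if i < j \<and> j \<le> q then max (G j) (forced_vector j) else G j)"

lemma rev_feasible_raise_above:
  assumes "rev_feasible G" "forced_vector i \<le> G i"
  shows "rev_feasible (raise_above i G)"
  unfolding rev_feasible_def
proof (intro conjI allI)
  let ?G = "raise_above i G"
  obtain M where "\<forall>j\<ge>M. G j = 0" using assms(1) unfolding rev_feasible_def eventually_zero_def by auto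
  then have "\<forall>j\<ge>max M (Suc q). ?G j = 0" by (auto simp: raise_above_def)
  then show "eventually_zero ?G" unfolding eventually_zero_def by blast
  fix l
  have ge: "G j \<le> ?G j" for j by (auto simp: raise_above_def)
  have exG: "0 \<le> rev_exchange G l" using assms(1) rev_feasible_def by auto
  show "0 \<le> rev_exchange ?G l"
  proof (cases "1 \<le> l \<and> i < l \<and> l \<le> q \<and> G l < forced_vector l")
    case True
    have "forced_vector (l - 1) \<le> ?G (l - 1)"
    proof (cases "i < l - 1")
      case False
      then have "l - 1 = i" using True by linarith
      then show ?thesis using assms(2) by (simp add: raise_above_def)
    qed (use True in \<open>auto simp: raise_above_def\<close>)
    then have "B (l - 1) * forced_vector (l - 1) \<le> B (l - 1) * ?G (l - 1)"
      using B_pos[of "l - 1"] by (intro mult_left_mono) auto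
    moreover have "?G l = forced_vector l" using True by (simp add: raise_above_def)
    ultimately show ?thesis
      using forced_vector_step[of l] True by (simp add: rev_exchange_def inflow_def)
  next
    case False
    then have "?G l = G l \<or> l = 0" by (auto simp: raise_above_def)
    moreover have "B (l - 1) * G (l - 1) \<le> B (l - 1) * ?G (l - 1)"
      using ge B_pos[of "l - 1"] by (intro mult_left_mono) auto
    ultimately show ?thesis
      using exG by (auto simp: rev_exchange_def inflow_def raise_above_def)
  qed
qed

lemma raise_above_top:
  assumes "i \<le> q" "forced_vector i \<le> G i"
  shows "1 \<le> raise_above i G q"
  using assms by (cases "i < q") (auto simp: raise_above_def forced_vector_def)

lemma weight_le_threshold_if_no_room:
  assumes "\<nexists>G. rev_feasible G \<and> has_room G" "rev_feasible G"
  shows "weight w G \<le> threshold_bound"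
proof (rule weight_le_threshold)
  show "eventually_zero G" using assms(2) rev_feasible_def by auto
  show "G i = 0" if "p \<le> i" for i using no_room_tail[OF assms(2) _ that] assms by blast
  show "G i \<le> forced_bound (q - i)" if i: "i \<le> q" for i
  proof -
    have "G i < forced_vector i"
    proof (rule ccontr)
      assume "\<not> G i < forced_vector i"
      then have "forced_vector i \<le> G i" by simp
      then have "has_room (raise_above i G)"
        using has_room_top rev_feasible_raise_above raise_above_top assms(2) i by blast
      then show False using rev_feasible_raise_above \<open>forced_vector i \<le> G i\<close> assms by blast
    qed
    then show ?thesis using forced_bounds[of "q - i"] i by (simp add: forced_vector_def)
  qed
qed

theorem rev_weights_cases:
  "(\<exists>Y. 0 \<le> Y \<and> Y \<le> threshold_bound \<and> {Y..} \<subseteq> rev_weights) \<or> rev_weights \<subseteq> {0..threshold_bound}"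
proof (cases "\<exists>G. rev_feasible G \<and> has_room G")
  case True
  then obtain G where G: "rev_feasible G" "has_room G" by auto
  show ?thesis
  proof (cases "has_room (\<lambda>i. 0)")
    case True
    then have "{0..} \<subseteq> rev_weights" using up_set_in_rev_weights[OF rev_feasible_zero] by simp
    then show ?thesis using threshold_bound_nonneg by blast
  next
    case False
    have "rev_feasible forced_vector"
      using rev_feasible_forced_vector[OF G(1) top_of_has_room[OF G False]] .
    then show ?thesis
      using up_set_in_rev_weights has_room_forced_vector weight_forced_vector weight_rev_nonneg
      by blast
  qed
next
  case False
  then have "rev_weights \<subseteq> {0..threshold_bound}"
    unfolding rev_weights_def using weight_le_threshold_if_no_room weight_rev_nonneg by auto
  then show ?thesis by blast
qed

end

section \<open>The atom sequence of an exponential Puiseux semiring\<close>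

locale atom_sequence =
  fixes a b :: int and e :: "nat \<Rightarrow> nat"
  assumes a_pos: "1 \<le> a" and b_pos: "1 \<le> b" and coprime_ab: "coprime a b"
    and e_mono: "strict_mono e"
begin

definition atom :: "nat \<Rightarrow> rat" where
  "atom i = (of_int a / of_int b) ^ e i"

definition gap :: "nat \<Rightarrow> nat" where
  "gap i = e (Suc i) - e i"

definition gap_num :: "nat \<Rightarrow> int" where
  "gap_num i = a ^ gap i"

definition gap_den :: "nat \<Rightarrow> int" where
  "gap_den i = b ^ gap i"

lemma gap_pos: "1 \<le> gap i"
  using e_mono[THEN strict_monoD, of i "Suc i"] unfolding gap_def by simp

lemma e_Suc: "e (Suc i) = e i + gap i"
  using e_mono[THEN strict_monoD, of i "Suc i"] unfolding gap_def by simp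

lemma atom_pos: "0 < atom i"
  unfolding atom_def using a_pos b_pos by simp

lemma gap_num_atom: "of_int (gap_num i) * atom i = of_int (gap_den i) * atom (Suc i)"
proof -
  have "(of_int b :: rat) \<noteq> 0" using b_pos by simp
  then have "(of_int b :: rat) ^ gap i * (of_int a / of_int b) ^ gap i = of_int a ^ gap i"
    by (simp add: power_divide)
  then show ?thesis
    unfolding gap_num_def gap_den_def atom_def e_Suc power_add by (simp add: ac_simps)
qed

lemma atom_scaled:
  assumes "e i \<le> E"
  shows "atom i * of_int b ^ E = of_int (a ^ e i * b ^ (E - e i))"
proof -
  have "(of_int b :: rat) ^ E = of_int b ^ e i * of_int b ^ (E - e i)"
    using assms by (simp add: power_add[symmetric])
  then show ?thesis unfolding atom_def using b_pos by (simp add: power_divide)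
qed

text \<open>Clearing denominators in a vanishing combination of atoms, every term beyond the first
  nonzero one is divisible by a ^ e (Suc k), and b is coprime to a.\<close>

lemma gap_num_dvd_first:
  assumes "\<forall>i<k. \<delta> i = 0" "\<forall>i\<ge>K. \<delta> i = 0" "(\<Sum>i<K. of_int (\<delta> i) * atom i) = 0" "k < K"
  shows "gap_num k dvd \<delta> k"
proof -
  define E where "E = e K"
  define T where "T i = \<delta> i * (a ^ e i * b ^ (E - e i))" for i
  have "e i \<le> E" if "i < K" for i
    using that e_mono unfolding E_def strict_mono_def by (simp add: less_imp_le)
  then have "(\<Sum>i<K. of_int (\<delta> i) * atom i) * of_int b ^ E = (\<Sum>i<K. of_int (T i) :: rat)"
    unfolding sum_distrib_right by (intro sum.cong) (auto simp: T_def mult.assoc atom_scaled)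
  then have "(\<Sum>i<K. T i) = 0" using assms(3) by (metis mult_zero_left of_int_eq_0_iff of_int_sum)
  moreover have "(\<Sum>i<K. T i) = T k + (\<Sum>i\<in>{Suc k..<K}. T i)"
  proof -
    have "(\<Sum>i<K. T i) = (\<Sum>i\<in>{..<k}. T i) + (\<Sum>i\<in>{k..<K}. T i)"
      using assms(4) by (metis atLeast0LessThan le_less sum.atLeastLessThan_concat zero_le)
    moreover have "(\<Sum>i\<in>{..<k}. T i) = 0" using assms(1) by (simp add: T_def)
    ultimately show ?thesis using assms(4) by (simp add: sum.atLeast_Suc_lessThan)
  qed
  moreover have "a ^ e (Suc k) dvd (\<Sum>i\<in>{Suc k..<K}. T i)"
  proof (rule dvd_sum)
    fix i assume "i \<in> {Suc k..<K}"
    then have "e (Suc k) \<le> e i" using e_mono unfolding strict_mono_def by (auto simp: le_less)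
    then show "a ^ e (Suc k) dvd T i" unfolding T_def by (simp add: le_imp_power_dvd)
  qed
  ultimately have "a ^ e k * a ^ gap k dvd a ^ e k * (\<delta> k * b ^ (E - e k))"
    unfolding T_def e_Suc by (simp add: power_add ac_simps dvd_minus_iff flip: eq_neg_iff_add_eq_0)
  then have "a ^ gap k dvd \<delta> k * b ^ (E - e k)" using a_pos by simp
  moreover have "coprime (a ^ gap k) (b ^ (E - e k))" using coprime_ab by simp
  ultimately show ?thesis unfolding gap_num_def using coprime_dvd_mult_left_iff by blast
qed

lemma zero_sum_carry:
  assumes "\<forall>i<k. \<delta> i = 0" "\<forall>i\<ge>K. \<delta> i = 0" "(\<Sum>i<K. of_int (\<delta> i) * atom i) = 0" "k < K"
    and c: "\<delta> k = gap_num k * c"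
  defines "\<delta>' \<equiv> \<delta>(k := 0, Suc k := \<delta> (Suc k) + gap_den k * c)"
  shows "(\<Sum>i<K. of_int (\<delta>' i) * atom i) = 0" "\<forall>i<Suc k. \<delta>' i = 0" "\<forall>i\<ge>K. \<delta>' i = 0"
proof -
  have c0: "c = 0" if "Suc k = K"
  proof -
    have "{..<K} = insert k {..<k}" using that by auto
    then have "of_int (\<delta> k) * atom k = 0" using assms(1,3) by simp
    then show ?thesis using c atom_pos[of k] a_pos by (simp add: gap_num_def)
  qed
  have \<delta>'_eq: "\<delta>' i = \<delta> i - (if i = k then gap_num k * c else 0) + (if i = Suc k then gap_den k * c else 0)"
    for i using c by (auto simp: \<delta>'_def)
  have "of_int (\<delta>' i) * atom i = of_int (\<delta> i) * atom i
      - (if i = k then of_int (gap_num k * c) * atom k else 0)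
      + (if i = Suc k then of_int (gap_den k * c) * atom (Suc k) else 0)" for i
    unfolding \<delta>'_eq by (auto simp: algebra_simps)
  then have "(\<Sum>i<K. of_int (\<delta>' i) * atom i) = (\<Sum>i<K. of_int (\<delta> i) * atom i)
      - (\<Sum>i<K. if i = k then of_int (gap_num k * c) * atom k else 0)
      + (\<Sum>i<K. if i = Suc k then of_int (gap_den k * c) * atom (Suc k) else 0)"
    by (simp add: sum.distrib sum_subtractf)
  also have "\<dots> = - of_int (gap_num k * c) * atom k
      + (if Suc k < K then of_int (gap_den k * c) * atom (Suc k) else 0)"
    using assms(3,4) by simp
  also have "\<dots> = 0"
    using c0 gap_num_atom[of k] assms(4) by (cases "Suc k < K") (auto simp: algebra_simps)
  finally show "(\<Sum>i<K. of_int (\<delta>' i) * atom i) = 0" .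
  show "\<forall>i<Suc k. \<delta>' i = 0" "\<forall>i\<ge>K. \<delta>' i = 0"
    using assms(1,2,4) c0 by (auto simp: \<delta>'_def)
qed

lemma zero_sum_exchange:
  assumes "\<forall>i<k. \<delta> i = 0" "\<forall>i\<ge>K. \<delta> i = 0" "(\<Sum>i<K. of_int (\<delta> i) * atom i) = 0"
  shows "\<exists>F. (\<forall>i<k. F i = 0) \<and> (\<forall>i\<ge>K. F i = 0) \<and> (\<forall>i. \<delta> i = gap_num i * F i - inflow gap_den F i)"
  using assms
proof (induction "K - k" arbitrary: k \<delta>)
  case 0
  then have "\<delta> i = 0" for i by (cases "i < k") auto
  then show ?case by (intro exI[of _ "\<lambda>i. 0"]) (simp add: inflow_def)
next
  case (Suc n)
  then have "k < K" by simp
  obtain c where c: "\<delta> k = gap_num k * c"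
    using gap_num_dvd_first[OF Suc.prems \<open>k < K\<close>] by blast
  define \<delta>' where "\<delta>' = \<delta>(k := 0, Suc k := \<delta> (Suc k) + gap_den k * c)"
  have "n = K - Suc k" using Suc.hyps(2) by simp
  then obtain F' where F': "\<forall>i<Suc k. F' i = 0" "\<forall>i\<ge>K. F' i = 0"
    "\<forall>i. \<delta>' i = gap_num i * F' i - inflow gap_den F' i"
    using Suc.hyps(1) zero_sum_carry[OF Suc.prems \<open>k < K\<close> c] unfolding \<delta>'_def by blast
  define F where "F = F'(k := c)"
  have "\<delta> i = gap_num i * F i - inflow gap_den F i" for i
    using F'(1) F'(3)[rule_format, of i] c
    by (cases "i = k"; cases "i = Suc k") (auto simp: F_def \<delta>'_def inflow_def)
  moreover have "\<forall>i<k. F i = 0" "\<forall>i\<ge>K. F i = 0" using F'(1,2) \<open>k < K\<close> by (auto simp: F_def)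
  ultimately show ?case by blast
qed

lemma sum_atoms_exchange:
  assumes "\<forall>i\<ge>M. F i = 0"
  shows "(\<Sum>i<Suc M. of_int (exchange gap_num gap_den z F i) * atom i) = (\<Sum>i<Suc M. of_int (z i) * atom i)"
proof -
  have "(\<Sum>i<Suc M. of_int (inflow gap_den F i) * atom i) =
      (\<Sum>i<M. of_int (gap_den i * F i) * atom (Suc i))"
    unfolding sum.lessThan_Suc_shift by (simp add: inflow_def)
  moreover have "(\<Sum>i<Suc M. of_int (gap_num i * F i) * atom i) =
      (\<Sum>i<M. of_int (gap_num i * F i) * atom i)"
    using assms by simp
  ultimately have "(\<Sum>i<Suc M. of_int (gap_num i * F i - inflow gap_den F i) * atom i) =
      (\<Sum>i<M. of_int (F i) * (of_int (gap_num i) * atom i - of_int (gap_den i) * atom (Suc i)))"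
    by (simp add: sum_subtractf algebra_simps)
  also have "\<dots> = 0" by (simp add: gap_num_atom)
  moreover have "of_int (exchange gap_num gap_den z F i) * atom i =
      of_int (z i) * atom i + of_int (gap_num i * F i - inflow gap_den F i) * atom i" for i
    unfolding exchange_def by (simp only: add_diff_eq[symmetric] of_int_add distrib_right)
  ultimately show ?thesis by (simp add: sum.distrib)
qed

end

lemma sum_lessThan_extend:
  fixes f :: "nat \<Rightarrow> 'a::comm_monoid_add"
  assumes "\<forall>i\<ge>M. f i = 0" "M \<le> K"
  shows "(\<Sum>i<K. f i) = (\<Sum>i<M. f i)"
  by (rule sum.mono_neutral_right) (use assms in auto)

locale tail_atom_sequence = atom_sequence +
  fixes p :: nat
  assumes a_ge_2: "2 \<le> a" and b_ge_2: "2 \<le> b" and p_pos: "1 \<le> p"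
    and e_tail: "\<And>i. p \<le> i \<Longrightarrow> e (Suc i) = Suc (e i)"
begin

definition trade_weight :: "nat \<Rightarrow> int" where
  "trade_weight i = (\<Sum>l<gap i. b ^ (gap i - Suc l) * a ^ l)"

lemma gap_num_minus_gap_den: "gap_num i - gap_den i = (a - b) * trade_weight i"
  unfolding gap_num_def gap_den_def trade_weight_def by (rule power_diff_sumr2)

lemma trade_weight_pos: "1 \<le> trade_weight i"
proof -
  obtain k where k: "gap i = Suc k" using gap_pos[of i] by (cases "gap i") auto
  have "b ^ k \<le> trade_weight i"
    unfolding trade_weight_def k sum.lessThan_Suc_shift using a_pos b_pos
    by (simp add: sum_nonneg)
  moreover have "1 \<le> b ^ k" using b_pos by simp
  ultimately show ?thesis by simp
qed

lemma gap_tail: "p \<le> i \<Longrightarrow> gap i = 1"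
  unfolding gap_def using e_tail by simp

sublocale exchange_system gap_num gap_den trade_weight p a b
proof
  show "1 \<le> gap_num i" "1 \<le> gap_den i" "1 \<le> trade_weight i" for i
    unfolding gap_num_def gap_den_def using a_pos b_pos trade_weight_pos by simp_all
  show "gap_num i = a" "gap_den i = b" "trade_weight i = 1" if "p \<le> i" for i
    using gap_tail[OF that] unfolding gap_num_def gap_den_def trade_weight_def by simp_all
qed

lemma sum_exchange:
  assumes "\<forall>i\<ge>M. F i = 0"
  shows "(\<Sum>i<Suc M. exchange gap_num gap_den z F i) = (\<Sum>i<Suc M. z i) + (a - b) * weight trade_weight F"
proof -
  have "(\<Sum>i<Suc M. inflow gap_den F i) = (\<Sum>i<M. gap_den i * F i)"
    unfolding sum.lessThan_Suc_shift by (simp add: inflow_def)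
  moreover have "(\<Sum>i<Suc M. gap_num i * F i) = (\<Sum>i<M. gap_num i * F i)"
    using assms by simp
  ultimately have "(\<Sum>i<Suc M. gap_num i * F i - inflow gap_den F i) = (\<Sum>i<M. (gap_num i - gap_den i) * F i)"
    by (simp add: sum_subtractf left_diff_distrib)
  also have "\<dots> = (a - b) * weight trade_weight F"
    unfolding gap_num_minus_gap_den weight_eq_sum[OF assms] by (simp add: sum_distrib_left algebra_simps)
  finally show ?thesis by (simp add: exchange_def sum.distrib add_diff_eq[symmetric])
qed

definition count_lengths :: "rat \<Rightarrow> nat set" where
  "count_lengths x = {\<Sum>i<M. c i | c M. (\<forall>i\<ge>M. c i = 0) \<and> (\<Sum>i<M. of_nat (c i) * atom i) = x}"

context
  fixes c0 :: "nat \<Rightarrow> nat" and M0 :: nat and x :: rat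
  assumes c0_zero: "\<forall>i\<ge>M0. c0 i = 0" and c0_value: "(\<Sum>i<M0. of_nat (c0 i) * atom i) = x"
begin

text \<open>Two count vectors of the same element differ by an exchange, and the length changes by
  (a - b) times its weight.\<close>

lemma count_length_in_weights:
  assumes "\<forall>i\<ge>M. c i = 0" "(\<Sum>i<M. of_nat (c i) * atom i) = x"
  shows "int (\<Sum>i<M. c i) \<in> (\<lambda>l. int (\<Sum>i<M0. c0 i) + (a - b) * l) ` weights (\<lambda>i. int (c0 i))"
proof -
  define K where "K = max M M0"
  define \<delta> where "\<delta> i = int (c i) - int (c0 i)" for i
  have "(\<Sum>i<K. of_nat (c i) * atom i) = x" "(\<Sum>i<K. of_nat (c0 i) * atom i) = x"
    using sum_lessThan_extend[of M "\<lambda>i. of_nat (c i) * atom i" K] assms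
      sum_lessThan_extend[of M0 "\<lambda>i. of_nat (c0 i) * atom i" K] c0_zero c0_value
    by (simp_all add: K_def)
  then have "(\<Sum>i<K. of_int (\<delta> i) * atom i) = 0"
    by (simp add: \<delta>_def sum_subtractf left_diff_distrib)
  moreover have "\<forall>i\<ge>K. \<delta> i = 0" using assms(1) c0_zero by (simp add: \<delta>_def K_def)
  ultimately obtain F where F: "\<forall>i\<ge>K. F i = 0" "\<forall>i. \<delta> i = gap_num i * F i - inflow gap_den F i"
    using zero_sum_exchange[of 0 \<delta> K] by auto
  have ex: "exchange gap_num gap_den (\<lambda>i. int (c0 i)) F i = int (c i)" for i
    using F(2) unfolding exchange_def \<delta>_def by (simp add: algebra_simps)
  then have "feasible (\<lambda>i. int (c0 i)) F"
    unfolding feasible_def eventually_zero_def using F(1) by auto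
  moreover have "int (\<Sum>i<M. c i) = int (\<Sum>i<M0. c0 i) + (a - b) * weight trade_weight F"
    using sum_exchange[OF F(1), of "\<lambda>i. int (c0 i)"] assms(1) c0_zero
      sum_lessThan_extend[of M c "Suc K"] sum_lessThan_extend[of M0 c0 "Suc K"]
    unfolding ex by (simp add: K_def flip: of_nat_sum)
  ultimately show ?thesis unfolding weights_def by blast
qed

lemma weights_in_count_lengths:
  assumes "l \<in> weights (\<lambda>i. int (c0 i))"
  shows "int (\<Sum>i<M0. c0 i) + (a - b) * l \<in> int ` count_lengths x"
proof -
  define z0 where "z0 i = int (c0 i)" for i
  obtain F where F: "feasible z0 F" "l = weight trade_weight F"
    using assms unfolding weights_def z0_def by auto
  obtain M1 where M1: "\<forall>i\<ge>M1. F i = 0" using F(1) unfolding feasible_def eventually_zero_def by auto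
  define K where "K = max M1 M0"
  have FK: "\<forall>i\<ge>K. F i = 0" using M1 by (simp add: K_def)
  define c where "c i = nat (exchange gap_num gap_den z0 F i)" for i
  have c: "int (c i) = exchange gap_num gap_den z0 F i" for i
    using F(1) unfolding c_def feasible_def by simp
  have "c i = 0" if "Suc K \<le> i" for i
  proof -
    have "F i = 0" "F (i - 1) = 0"
      using that FK[rule_format, of i] FK[rule_format, of "i - 1"] by auto
    moreover have "c0 i = 0" using that c0_zero by (simp add: K_def)
    ultimately show ?thesis using c[of i] that by (simp add: z0_def exchange_def inflow_def)
  qed
  moreover have "(\<Sum>i<Suc K. of_nat (c i) * atom i) = x"
    using sum_atoms_exchange[OF FK, of z0] c0_zero c0_value
      sum_lessThan_extend[of M0 "\<lambda>i. of_nat (c0 i) * atom i" "Suc K"]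
    by (simp add: K_def z0_def flip: c)
  ultimately have "(\<Sum>i<Suc K. c i) \<in> count_lengths x"
    unfolding count_lengths_def by blast
  moreover have "int (\<Sum>i<Suc K. c i) = int (\<Sum>i<M0. c0 i) + (a - b) * l"
    using sum_exchange[OF FK, of z0] c0_zero sum_lessThan_extend[of M0 c0 "Suc K"]
    by (simp add: K_def z0_def F(2) flip: c of_nat_sum)
  ultimately show ?thesis by (metis image_eqI)
qed

lemma count_lengths_eq_weights:
  "int ` count_lengths x = (\<lambda>l. int (\<Sum>i<M0. c0 i) + (a - b) * l) ` weights (\<lambda>i. int (c0 i))"
  using count_length_in_weights weights_in_count_lengths unfolding count_lengths_def by fastforce

end

end

section \<open>Almost arithmetic progressions\<close>

lemma AAP_I:
  assumes "L = (\<lambda>z. y + z) ` (L1 \<union> Ls \<union> L2)" "\<forall>z\<in>L. d dvd (z - y)" "L1 \<subseteq> {- int B .. -1}"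
    "(Ls = {d * int k | k. True} \<and> L2 = {}) \<or>
     (\<exists>n\<ge>1. Ls = {d * int k | k. k < n} \<and> L2 \<subseteq> {Max Ls + 1 .. Max Ls + int B})"
  shows "AAP d B L"
  using assms unfolding AAP_def by blast

lemma Max_multiples: 
  assumes "0 \<le> d" "1 \<le> n"
  shows "Max {d * int k | k. k < n} = d * int (n - 1)"
proof (rule Max_eqI)
  have "{d * int k | k. k < n} = (\<lambda>k. d * int k) ` {..<n}" by auto
  then show "finite {d * int k | k. k < n}" by simp
  show "d * int (n - 1) \<in> {d * int k | k. k < n}" using assms by (auto intro!: exI[of _ "n - 1"])
  fix y assume "y \<in> {d * int k | k. k < n}"
  then show "y \<le> d * int (n - 1)" using assms by (auto intro: mult_left_mono)
qed

lemma AAP_singleton: "AAP d B {y}"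
proof (rule AAP_I[of _ y "{}" "{d * int k | k. k < 1}" "{}"])
  have "{d * int k | k. k < (1::nat)} = {0}" by auto
  then show "{y} = (\<lambda>z. y + z) ` ({} \<union> {d * int k | k. k < 1} \<union> {})" by simp
qed auto

lemma AAP_affine_interval:
  fixes d K Y y0 :: int and \<Lambda> :: "int set"
  assumes "1 \<le> d" "0 \<le> K" "0 \<le> Y" "{0..Y} \<subseteq> \<Lambda>" "\<Lambda> \<subseteq> {0..Y + K}"
  shows "AAP d (nat (d * K)) ((\<lambda>l. y0 + d * l) ` \<Lambda>)"
proof -
  define Ls where "Ls = {d * int k | k. k < Suc (nat Y)}"
  define L2 where "L2 = (\<lambda>l. d * l) ` {l\<in>\<Lambda>. Y < l}"
  have Max_Ls: "Max Ls = d * Y" unfolding Ls_def using Max_multiples[of d "Suc (nat Y)"] assms by simp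
  have Ls: "Ls = (\<lambda>l. d * l) ` {0..Y}"
  proof (intro equalityI subsetI)
    fix u assume "u \<in> Ls"
    then obtain k where "u = d * int k" "k < Suc (nat Y)" unfolding Ls_def by blast
    then show "u \<in> (\<lambda>l. d * l) ` {0..Y}"
      using assms(3) by (intro image_eqI[of _ _ "int k"]) (auto simp: less_Suc_eq_le le_nat_iff)
  next
    fix u assume "u \<in> (\<lambda>l. d * l) ` {0..Y}"
    then obtain l where "u = d * l" "l \<in> {0..Y}" by blast
    then show "u \<in> Ls" unfolding Ls_def by (intro CollectI exI[of _ "nat l"]) auto
  qed
  show ?thesis
  proof (rule AAP_I[of _ y0 "{}" Ls L2])
    have "\<Lambda> = {0..Y} \<union> {l\<in>\<Lambda>. Y < l}" using assms(4,5) by auto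
    then show "(\<lambda>l. y0 + d * l) ` \<Lambda> = (\<lambda>z. y0 + z) ` ({} \<union> Ls \<union> L2)"
      unfolding Ls L2_def by (auto simp: image_Un image_image)
    have "L2 \<subseteq> {Max Ls + 1..Max Ls + int (nat (d * K))}"
    proof
      fix u assume "u \<in> L2"
      then obtain l where l: "l \<in> \<Lambda>" "Y < l" "u = d * l" unfolding L2_def by auto
      have "d * (Y + 1) \<le> d * l" "d * l \<le> d * (Y + K)"
        using l assms(1,5) by (auto intro!: mult_left_mono)
      then show "u \<in> {Max Ls + 1..Max Ls + int (nat (d * K))}"
        using l(3) Max_Ls assms(1,2) by (simp add: algebra_simps)
    qed
    then show "(Ls = {d * int k | k. True} \<and> L2 = {}) \<or>
      (\<exists>n\<ge>1. Ls = {d * int k | k. k < n} \<and> L2 \<subseteq> {Max Ls + 1..Max Ls + int (nat (d * K))})"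
      unfolding Ls_def by auto
  qed auto
qed

lemma AAP_affine_ray:
  fixes d K Y y0 :: int and \<Lambda> :: "int set"
  assumes "1 \<le> d" "0 \<le> Y" "Y \<le> K" "{Y..} \<subseteq> \<Lambda>" "\<Lambda> \<subseteq> {0..}"
  shows "AAP d (nat (d * K)) ((\<lambda>l. y0 + d * l) ` \<Lambda>)"
proof -
  define L1 where "L1 = (\<lambda>l. d * (l - Y)) ` {l\<in>\<Lambda>. l < Y}"
  define Ls where "Ls = {d * int k | k. True}"
  have Ls: "Ls = (\<lambda>l. d * (l - Y)) ` {Y..}"
  proof (intro equalityI subsetI)
    fix u assume "u \<in> Ls"
    then obtain k where "u = d * int k" unfolding Ls_def by auto
    then show "u \<in> (\<lambda>l. d * (l - Y)) ` {Y..}" by (intro image_eqI[of _ _ "Y + int k"]) auto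
  next
    fix u assume "u \<in> (\<lambda>l. d * (l - Y)) ` {Y..}"
    then obtain l where "u = d * (l - Y)" "l \<in> {Y..}" by blast
    then show "u \<in> Ls" unfolding Ls_def by (intro CollectI exI[of _ "nat (l - Y)"]) auto
  qed
  show ?thesis
  proof (rule AAP_I[of _ "y0 + d * Y" L1 Ls "{}"])
    have "\<Lambda> = {l\<in>\<Lambda>. l < Y} \<union> {Y..}" using assms(4) by auto
    then show "(\<lambda>l. y0 + d * l) ` \<Lambda> = (\<lambda>z. y0 + d * Y + z) ` (L1 \<union> Ls \<union> {})"
      unfolding Ls L1_def by (auto simp: image_Un image_image algebra_simps)
    show "\<forall>z\<in>(\<lambda>l. y0 + d * l) ` \<Lambda>. d dvd z - (y0 + d * Y)"
      by (auto simp: right_diff_distrib[symmetric])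
    show "L1 \<subseteq> {- int (nat (d * K))..-1}"
    proof
      fix u assume "u \<in> L1"
      then obtain l where l: "l \<in> \<Lambda>" "l < Y" "u = d * (l - Y)" unfolding L1_def by auto
      have "l - Y \<le> -1" "- K \<le> l - Y" using l assms(3,5) by auto
      then have "d * (l - Y) \<le> d * (-1)" "d * (- K) \<le> d * (l - Y)"
        using assms(1) by (intro mult_left_mono; simp)+
      then show "u \<in> {- int (nat (d * K))..-1}" using l(3) assms(1) by simp
    qed
  qed (auto simp: Ls_def)
qed

section \<open>Generated monoids and numerical monoids\<close>

lemma gen_monoid_iff: "x \<in> gen_monoid G \<longleftrightarrow> (\<exists>m. set_mset m \<subseteq> G \<and> sum_mset m = x)"
  unfolding gen_monoid_def by auto

lemma gen_monoid_multiple: "g \<in> G \<Longrightarrow> of_nat n * g \<in> gen_monoid G"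
  unfolding gen_monoid_iff by (intro exI[of _ "replicate_mset n g"]) auto

lemma gen_monoid_generator: "g \<in> G \<Longrightarrow> g \<in> gen_monoid G"
  using gen_monoid_multiple[of g G 1] by simp

lemma atoms_gen_monoid_subset:
  assumes "\<forall>g\<in>G. 0 < g"
  shows "atoms (gen_monoid G) \<subseteq> G"
proof
  fix y assume y: "y \<in> atoms (gen_monoid G)"
  then obtain m where m: "set_mset m \<subseteq> G" "sum_mset m = y"
    unfolding atoms_def gen_monoid_iff by auto
  moreover have "m \<noteq> {#}" using m y unfolding atoms_def by auto
  ultimately obtain g m' where g: "m = add_mset g m'" "g \<in> G" "set_mset m' \<subseteq> G"
    by (metis insert_subset multiset_cases set_mset_add_mset_insert)
  have "y = g + sum_mset m'" using g(1) m(2) by simp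
  moreover have "g \<in> gen_monoid G" "sum_mset m' \<in> gen_monoid G"
    using g(2,3) gen_monoid_generator gen_monoid_iff by auto
  ultimately have "g = 0 \<or> sum_mset m' = 0" using y unfolding atoms_def by blast
  then show "y \<in> G" using \<open>y = g + sum_mset m'\<close> g(2) assms by force
qed

lemma gen_monoid_sum_size_ge_2:
  assumes "u \<in> gen_monoid G" "v \<in> gen_monoid G" "u \<noteq> 0" "v \<noteq> 0"
  obtains m where "set_mset m \<subseteq> G" "sum_mset m = u + v" "2 \<le> size m"
proof -
  obtain m1 m2 where "set_mset m1 \<subseteq> G" "sum_mset m1 = u" "set_mset m2 \<subseteq> G" "sum_mset m2 = v"
    using assms(1,2) gen_monoid_iff by meson
  moreover have "m1 \<noteq> {#}" "m2 \<noteq> {#}" using calculation assms(3,4) by auto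
  ultimately show ?thesis
    using that[of "m1 + m2"] by (simp add: Suc_le_eq nonempty_has_size)
qed

lemma numerical_monoid_zero: "numerical_monoid N \<Longrightarrow> 0 \<in> N"
  unfolding numerical_monoid_def by blast

lemma numerical_monoid_cofinite:
  assumes "numerical_monoid N"
  shows "\<exists>c. \<forall>s\<ge>c. s \<in> N"
proof -
  have "finite (UNIV - N)" using assms numerical_monoid_def by auto
  then obtain c where "\<forall>s\<in>UNIV - N. s < c" using finite_nat_set_iff_bounded by blast
  then show ?thesis by (meson DiffI UNIV_I not_le)
qed

lemma numerical_monoid_infinite:
  assumes "numerical_monoid N"
  shows "infinite N"
proof
  assume "finite N"
  moreover have "finite (UNIV - N)" using assms numerical_monoid_def by auto
  ultimately have "finite (N \<union> (UNIV - N))" by simp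
  then show False by simp
qed

lemma enumerate_numerical_monoid_tail:
  assumes "numerical_monoid N"
  obtains p where "1 \<le> p" "\<And>i. p \<le> i \<Longrightarrow> enumerate N (Suc i) = Suc (enumerate N i)"
proof -
  have inf: "infinite N" using numerical_monoid_infinite[OF assms] .
  obtain c where c: "\<forall>s\<ge>c. s \<in> N" using numerical_monoid_cofinite[OF assms] by blast
  have "enumerate N (Suc i) = Suc (enumerate N i)" if "Suc c \<le> i" for i
  proof -
    have "c \<le> enumerate N i" using le_enumerate[OF inf, of i] that by simp
    then have "Suc (enumerate N i) \<in> N" using c by simp
    then obtain j where j: "enumerate N j = Suc (enumerate N i)" using enumerate_Ex[OF inf] by blast
    then have "i < j" using enumerate_mono_iff[OF inf, of i j] by simp
    then have "enumerate N (Suc i) \<le> enumerate N j" using enumerate_mono_le_iff[OF inf] by simp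
    then show ?thesis using j enumerate_step[OF inf, of i] by simp
  qed
  then show ?thesis using that[of "Suc c"] by simp
qed

lemma counts_of_multiset:
  fixes \<rho> :: "nat \<Rightarrow> rat"
  assumes "inj \<rho>"
  shows "set_mset m \<subseteq> \<rho> ` {..<M} \<Longrightarrow>
    size m = (\<Sum>i<M. count m (\<rho> i)) \<and> sum_mset m = (\<Sum>i<M. of_nat (count m (\<rho> i)) * \<rho> i)"
proof (induction m)
  case (add x m)
  then obtain j where j: "j < M" "x = \<rho> j" by auto
  have c: "count (add_mset x m) (\<rho> i) = count m (\<rho> i) + (if i = j then 1 else 0)" for i
    using assms j(2) by (auto simp: inj_eq)
  have "of_nat (count (add_mset x m) (\<rho> i)) * \<rho> i =
      of_nat (count m (\<rho> i)) * \<rho> i + (if i = j then \<rho> j else 0)" for i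
    unfolding c by (simp add: distrib_right)
  then show ?case using add j unfolding c by (simp add: sum.distrib)
qed simp

lemma multiset_of_counts:
  fixes \<rho> :: "nat \<Rightarrow> rat"
  shows "size (\<Sum>i<M. replicate_mset (c i) (\<rho> i)) = (\<Sum>i<M. c i)"
    and "sum_mset (\<Sum>i<M. replicate_mset (c i) (\<rho> i)) = (\<Sum>i<M. of_nat (c i) * \<rho> i)"
    and "set_mset (\<Sum>i<M. replicate_mset (c i) (\<rho> i)) \<subseteq> \<rho> ` {..<M}"
  by (induction M) auto

lemma lengths_eq_counts:
  fixes \<rho> :: "nat \<Rightarrow> rat"
  assumes "inj \<rho>" "atoms S = range \<rho>"
  shows "lengths S x = {\<Sum>i<M. c i | c M. (\<forall>i\<ge>M. c i = 0) \<and> (\<Sum>i<M. of_nat (c i) * \<rho> i) = x}"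
proof (intro equalityI subsetI)
  fix l assume "l \<in> lengths S x"
  then obtain m where m: "l = size m" "set_mset m \<subseteq> range \<rho>" "sum_mset m = x"
    unfolding lengths_def assms(2) by auto
  have "finite (\<rho> -` set_mset m)" using assms(1) by (intro finite_vimageI) auto
  then obtain M where M: "\<forall>i\<in>\<rho> -` set_mset m. i < M" using finite_nat_set_iff_bounded by blast
  then have "set_mset m \<subseteq> \<rho> ` {..<M}" using m(2) by fastforce
  moreover have "\<forall>i\<ge>M. count m (\<rho> i) = 0"
  proof (intro allI impI)
    fix i assume "M \<le> i"
    then have "i \<notin> \<rho> -` set_mset m" using M by (meson not_le)
    then show "count m (\<rho> i) = 0" by (simp add: count_eq_zero_iff)
  qed
  moreover have "l = (\<Sum>i<M. count m (\<rho> i))" "(\<Sum>i<M. of_nat (count m (\<rho> i)) * \<rho> i) = x"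
    using counts_of_multiset[OF assms(1) \<open>set_mset m \<subseteq> \<rho> ` {..<M}\<close>] m(1,3) by auto
  ultimately show "l \<in> {\<Sum>i<M. c i | c M. (\<forall>i\<ge>M. c i = 0) \<and> (\<Sum>i<M. of_nat (c i) * \<rho> i) = x}"
    by blast
next
  fix l assume "l \<in> {\<Sum>i<M. c i | c M. (\<forall>i\<ge>M. c i = 0) \<and> (\<Sum>i<M. of_nat (c i) * \<rho> i) = x}"
  then obtain c M where "l = (\<Sum>i<M. c i)" "(\<Sum>i<M. of_nat (c i) * \<rho> i) = x" by blast
  then show "l \<in> lengths S x"
    using multiset_of_counts[where M = M and c = c and \<rho> = \<rho>] assms(2) unfolding lengths_def
    by (intro CollectI exI[of _ "\<Sum>i<M. replicate_mset (c i) (\<rho> i)"]) auto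
qed

section \<open>Atoms and lengths of exponential Puiseux semirings\<close>

lemma one_in_exp_puiseux_generators:
  fixes r :: rat
  assumes "numerical_monoid N"
  shows "1 \<in> {r ^ k | k. k \<in> N}"
  using numerical_monoid_zero[OF assms] by force

lemma of_nat_in_exp_puiseux:
  assumes "numerical_monoid N"
  shows "of_nat n \<in> exp_puiseux r N"
  using gen_monoid_multiple[OF one_in_exp_puiseux_generators[where r = r, OF assms], of n]
  unfolding exp_puiseux_def by simp

lemma sum_mset_Nats: "set_mset m \<subseteq> \<nat> \<Longrightarrow> sum_mset m \<in> (\<nat> :: rat set)"
  by (induction m) auto

lemma sum_mset_ones: "set_mset m \<subseteq> {1} \<Longrightarrow> sum_mset m = (of_nat (size m) :: rat)"
  by (induction m) auto

lemma exp_puiseux_of_int_Nats: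
  assumes "1 \<le> a"
  shows "exp_puiseux (of_int a) N \<subseteq> \<nat>"
proof
  fix y assume "y \<in> exp_puiseux (of_int a) N"
  then obtain m where m: "set_mset m \<subseteq> {of_int a ^ k | k. k \<in> N}" "sum_mset m = y"
    unfolding exp_puiseux_def gen_monoid_iff by auto
  have "(of_int a :: rat) ^ k = of_nat (nat a ^ k)" for k using assms by simp
  then have "(of_int a :: rat) ^ k \<in> \<nat>" for k by (metis of_nat_in_Nats)
  then have "set_mset m \<subseteq> \<nat>" using m(1) by auto
  then show "y \<in> \<nat>" using m(2) sum_mset_Nats by blast
qed

lemma atoms_exp_puiseux_of_int:
  assumes "numerical_monoid N" "1 \<le> a"
  shows "atoms (exp_puiseux (of_int a) N) = {1}"
proof -
  let ?S = "exp_puiseux (of_int a) N"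
  have Nats: "y \<in> ?S \<Longrightarrow> y \<in> \<nat>" for y using exp_puiseux_of_int_Nats[OF assms(2)] by blast
  have one: "(1::rat) \<in> ?S" using of_nat_in_exp_puiseux[OF assms(1), where n = 1] by simp
  have "y = 1" if y: "y \<in> atoms ?S" for y
  proof -
    have "y \<in> \<nat>" using Nats y unfolding atoms_def by auto
    then obtain n where n: "y = of_nat n" by (rule Nats_cases)
    have "n \<noteq> 0" using n y unfolding atoms_def by auto
    then have "y = 1 + of_nat (n - 1)" using n by (simp add: of_nat_diff)
    moreover have "\<forall>u\<in>?S. \<forall>v\<in>?S. y = u + v \<longrightarrow> u = 0 \<or> v = 0" using y unfolding atoms_def by blast
    ultimately have "(1::rat) = 0 \<or> of_nat (n - 1) = (0::rat)"
      using one of_nat_in_exp_puiseux[OF assms(1), where n = "n - 1" and r = "of_int a"] by blast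
    then show ?thesis using n \<open>n \<noteq> 0\<close> by simp
  qed
  moreover have "1 \<in> atoms ?S"
  proof -
    have "u = 0 \<or> v = 0" if uv: "u \<in> ?S" "v \<in> ?S" "1 = u + v" for u v
    proof -
      obtain i where i: "u = of_nat i" using Nats[OF uv(1)] by (rule Nats_cases)
      obtain j where j: "v = of_nat j" using Nats[OF uv(2)] by (rule Nats_cases)
      have "of_nat (i + j) = (of_nat 1 :: rat)" using uv(3) i j by simp
      then have "i + j = 1" by (simp only: of_nat_eq_iff)
      then show ?thesis using i j by (cases i) auto
    qed
    then show ?thesis using one unfolding atoms_def by simp
  qed
  ultimately show ?thesis by blast
qed

lemma lengths_exp_puiseux_of_int:
  assumes "numerical_monoid N" "1 \<le> a"
  shows "lengths (exp_puiseux (of_int a) N) (of_nat n) = {n}"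
proof (intro equalityI subsetI)
  fix l assume "l \<in> lengths (exp_puiseux (of_int a) N) (of_nat n)"
  then obtain m where "l = size m" "set_mset m \<subseteq> {1}" "sum_mset m = (of_nat n :: rat)"
    unfolding lengths_def atoms_exp_puiseux_of_int[OF assms] by auto
  then show "l \<in> {n}" using sum_mset_ones by simp
next
  fix l assume "l \<in> {n}"
  then show "l \<in> lengths (exp_puiseux (of_int a) N) (of_nat n)"
    unfolding lengths_def atoms_exp_puiseux_of_int[OF assms]
    by (intro CollectI exI[of _ "replicate_mset n 1"]) auto
qed

lemma atoms_exp_puiseux_unit_fraction:
  assumes "numerical_monoid N" "2 \<le> b"
  shows "atoms (exp_puiseux (1 / of_int b) N) = {}"
proof -
  define r where "r = 1 / (of_int b :: rat)"
  let ?S = "exp_puiseux r N"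
  have "0 < r" using assms(2) by (simp add: r_def)
  obtain c where c: "\<forall>s\<ge>c. s \<in> N" using numerical_monoid_cofinite[OF assms(1)] by blast
  have power_in: "of_nat n * r ^ j \<in> ?S" if "j \<in> N" for n j
    unfolding exp_puiseux_def by (rule gen_monoid_multiple) (use that in blast)
  have "y \<notin> atoms ?S" for y
  proof
    assume y: "y \<in> atoms ?S"
    have "atoms ?S \<subseteq> {r ^ k | k. k \<in> N}"
      unfolding exp_puiseux_def by (rule atoms_gen_monoid_subset) (use \<open>0 < r\<close> in auto)
    then obtain k where k: "y = r ^ k" using y by auto
    define j where "j = max c (Suc k)"
    have "j \<in> N" "k < j" using c by (auto simp: j_def)
    define n where "n = nat (b ^ (j - k) - 1)"
    have "b ^ 1 \<le> b ^ (j - k)" using assms(2) \<open>k < j\<close> by (intro power_increasing) auto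
    then have "1 \<le> n" using assms(2) by (simp add: n_def)
    have "y = r ^ j + of_nat n * r ^ j"
    proof -
      have "(of_int b :: rat) ^ (j - k) * r ^ (j - k) = 1"
        using assms(2) by (simp add: r_def power_one_over)
      moreover have "r ^ j = r ^ k * r ^ (j - k)"
        using \<open>k < j\<close> by (simp add: power_add[symmetric])
      moreover have "1 \<le> b ^ (j - k)" using assms(2) by simp
      ultimately show ?thesis using k by (simp add: n_def of_nat_diff algebra_simps)
    qed
    moreover have "r ^ j \<in> ?S" "of_nat n * r ^ j \<in> ?S"
      using power_in[OF \<open>j \<in> N\<close>, of 1] power_in[OF \<open>j \<in> N\<close>] by auto
    moreover have "\<forall>u\<in>?S. \<forall>v\<in>?S. y = u + v \<longrightarrow> u = 0 \<or> v = 0" using y unfolding atoms_def by blast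
    ultimately have "r ^ j = 0 \<or> of_nat n * r ^ j = 0" by blast
    then show False using \<open>0 < r\<close> \<open>1 \<le> n\<close> by simp
  qed
  then show ?thesis by (auto simp: r_def)
qed

lemma not_atomic_exp_puiseux_unit_fraction:
  assumes "numerical_monoid N" "2 \<le> b"
  shows "\<not> atomic (exp_puiseux (1 / of_int b) N)"
proof
  assume "atomic (exp_puiseux (1 / of_int b) N)"
  moreover have "(1::rat) \<in> exp_puiseux (1 / of_int b) N"
    using of_nat_in_exp_puiseux[OF assms(1), where n = 1] by simp
  ultimately have "\<exists>m. set_mset m \<subseteq> atoms (exp_puiseux (1 / of_int b) N) \<and> sum_mset m = (1::rat)"
    unfolding atomic_def by (metis zero_neq_one)
  then show False using atoms_exp_puiseux_unit_fraction[OF assms] by auto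
qed

lemma sum_mset_int_multiples:
  fixes f :: "rat \<Rightarrow> rat" and D :: int
  assumes "\<And>g. g \<in># m \<Longrightarrow> \<exists>c. f g = of_int (D * c)"
  shows "\<exists>C. (\<Sum>g\<in>#m. f g) = of_int (D * C)"
  using assms
proof (induction m)
  case empty
  then show ?case by (intro exI[of _ 0]) simp
next
  case (add x m)
  then obtain C c where "(\<Sum>g\<in>#m. f g) = of_int (D * C)" "f x = of_int (D * c)" by force
  then show ?case by (intro exI[of _ "c + C"]) (simp add: algebra_simps)
qed

lemma sum_mset_pos:
  fixes m :: "rat multiset"
  assumes "\<forall>g\<in>#m. 0 < g" "m \<noteq> {#}"
  shows "0 < sum_mset m"
  using assms
proof (induction m)
  case (add x m)
  then show ?case by (cases "m = {#}") (auto intro: add_pos_pos)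
qed simp

lemma fraction_power_scaled:
  fixes a b :: int
  assumes "b \<noteq> 0" "t \<le> T"
  shows "(of_int a / of_int b :: rat) ^ t * of_int b ^ T = of_int (a ^ t * b ^ (T - t))"
proof -
  have "(of_int b :: rat) ^ T = of_int b ^ t * of_int b ^ (T - t)"
    using assms by (simp add: power_add[symmetric])
  then show ?thesis using assms(1) by (simp add: power_divide)
qed

context
  fixes r :: rat and a b :: int and m :: "rat multiset" and s :: nat
  assumes r: "r = of_int a / of_int b" and a_ge_2: "2 \<le> a" and b_ge_2: "2 \<le> b"
    and coprime_ab: "coprime a b"
    and powers: "\<forall>g\<in>#m. \<exists>t. g = r ^ t" and sum_power: "sum_mset m = r ^ s" and size_m: "2 \<le> size m"
begin

lemma sum_mset_scaled: "(\<Sum>g\<in>#m. g * of_int b ^ T) = of_int (a ^ s * b ^ (T - s))" if "s \<le> T"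
proof -
  have "(\<Sum>g\<in>#m. g * of_int b ^ T) = sum_mset m * of_int b ^ T"
    by (induction m) (auto simp: algebra_simps)
  then show ?thesis using sum_power fraction_power_scaled[OF _ that, of b a] r b_ge_2 by simp
qed

lemma summand_less: "g \<in># m \<Longrightarrow> g < r ^ s"
proof -
  assume "g \<in># m"
  then obtain m' where m': "m = add_mset g m'" by (metis multi_member_split)
  moreover have "0 < r" using r a_ge_2 b_ge_2 by simp
  ultimately have "0 < sum_mset m'"
    using size_m powers by (intro sum_mset_pos) auto
  then show "g < r ^ s" using sum_power m' by simp
qed

lemma power_not_sum_of_larger_powers: False if "b < a"
proof -
  have "1 < r" using that r b_ge_2 by simp
  have "\<exists>c. g * of_int b ^ s = of_int (b * c)" if g: "g \<in># m" for g
  proof -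
    obtain t where t: "g = r ^ t" using powers g by auto
    then have "t < s" using summand_less[OF g] \<open>1 < r\<close> by simp
    then have "g * of_int b ^ s = of_int (a ^ t * b ^ (s - t))"
      using fraction_power_scaled[of b t s a] t r b_ge_2 by simp
    also have "\<dots> = of_int (b * (a ^ t * b ^ (s - t - 1)))"
      using \<open>t < s\<close> by (simp add: power_eq_if)
    finally show ?thesis by blast
  qed
  then obtain C where "(\<Sum>g\<in>#m. g * of_int b ^ s) = of_int (b * C)"
    using sum_mset_int_multiples[of m "\<lambda>g. g * of_int b ^ s" b] by blast
  then have "of_int (a ^ s) = (of_int (b * C) :: rat)" using sum_mset_scaled[of s] by simp
  then have "b dvd a ^ s" by (simp only: of_int_eq_iff) simp
  moreover have "coprime b (a ^ s)" using coprime_ab by (simp add: coprime_commute)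
  ultimately have "is_unit b" by (meson coprime_common_divisor dvd_refl)
  then show False using b_ge_2 by simp
qed

lemma power_not_sum_of_smaller_powers: False if "a < b"
proof -
  have "0 < r" "r < 1" using that r a_ge_2 by simp_all
  have "\<exists>t. g = r ^ t \<and> s < t" if g: "g \<in># m" for g
  proof -
    obtain t where "g = r ^ t" using powers g by auto
    moreover have "r ^ t < r ^ s" using summand_less[OF g] \<open>g = r ^ t\<close> by simp
    ultimately show ?thesis using \<open>0 < r\<close> \<open>r < 1\<close> power_strict_decreasing_iff by blast
  qed
  then obtain t where t: "\<And>g. g \<in># m \<Longrightarrow> g = r ^ t g \<and> s < t g" by metis
  define T where "T = Max (t ` set_mset m)"
  have tT: "t g \<le> T" if "g \<in># m" for g using that unfolding T_def by simp
  obtain g0 where "g0 \<in># m" using size_m by fastforce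
  then have "s \<le> T" using t tT by (meson less_imp_le order.trans)
  have "\<exists>c. g * of_int b ^ T = of_int (a ^ Suc s * c)" if g: "g \<in># m" for g
  proof -
    have "g * of_int b ^ T = of_int (a ^ t g * b ^ (T - t g))"
      using fraction_power_scaled[of b "t g" T a] t[OF g] tT[OF g] r b_ge_2 by simp
    also have "\<dots> = of_int (a ^ Suc s * (a ^ (t g - Suc s) * b ^ (T - t g)))"
    proof -
      have "t g = Suc s + (t g - Suc s)" using t[OF g] by simp
      then have "a ^ t g = a ^ Suc s * a ^ (t g - Suc s)" by (metis power_add)
      then show ?thesis by simp
    qed
    finally show ?thesis by blast
  qed
  then obtain C where "(\<Sum>g\<in>#m. g * of_int b ^ T) = of_int (a ^ Suc s * C)"
    using sum_mset_int_multiples[of m "\<lambda>g. g * of_int b ^ T" "a ^ Suc s"] by blast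
  then have "of_int (a ^ s * b ^ (T - s)) = (of_int (a ^ s * (a * C)) :: rat)"
    using sum_mset_scaled[OF \<open>s \<le> T\<close>] by simp
  then have "a ^ s * b ^ (T - s) = a ^ s * (a * C)" by (simp only: of_int_eq_iff)
  then have "a dvd b ^ (T - s)" using a_ge_2 by simp
  moreover have "coprime a (b ^ (T - s))" using coprime_ab by simp
  ultimately have "is_unit a" by (meson coprime_common_divisor dvd_refl)
  then show False using a_ge_2 by simp
qed

end

lemma atoms_exp_puiseux_coprime:
  assumes r: "r = of_int a / of_int b" and "2 \<le> a" "2 \<le> b" "coprime a b"
  shows "atoms (exp_puiseux r N) = {r ^ k | k. k \<in> N}"
proof
  have "0 < r" using assms by simp
  then show "atoms (exp_puiseux r N) \<subseteq> {r ^ k | k. k \<in> N}"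
    unfolding exp_puiseux_def by (intro atoms_gen_monoid_subset) auto
  have "a \<noteq> b" using assms(2,4) by auto
  show "{r ^ k | k. k \<in> N} \<subseteq> atoms (exp_puiseux r N)"
  proof
    fix g assume g: "g \<in> {r ^ k | k. k \<in> N}"
    then obtain s where s: "g = r ^ s" by auto
    have "u = 0 \<or> v = 0" if "u \<in> exp_puiseux r N" "v \<in> exp_puiseux r N" "g = u + v" for u v
    proof (rule ccontr)
      assume "\<not> (u = 0 \<or> v = 0)"
      then have "u \<in> gen_monoid {r ^ k | k. k \<in> N}" "v \<in> gen_monoid {r ^ k | k. k \<in> N}" "u \<noteq> 0" "v \<noteq> 0"
        using that(1,2) unfolding exp_puiseux_def by auto
      then obtain m where m: "set_mset m \<subseteq> {r ^ k | k. k \<in> N}" "sum_mset m = u + v" "2 \<le> size m"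
        by (rule gen_monoid_sum_size_ge_2)
      have "\<forall>g\<in>#m. \<exists>t. g = r ^ t" using m(1) by auto
      moreover have "sum_mset m = r ^ s" using m(2) that(3) s by simp
      moreover consider "b < a" | "a < b" using \<open>a \<noteq> b\<close> by linarith
      ultimately show False
        using power_not_sum_of_larger_powers[OF r assms(2-4)] power_not_sum_of_smaller_powers[OF r assms(2-4)]
          m(3) by metis
    qed
    moreover have "g \<in> exp_puiseux r N" "g \<noteq> 0"
      using g s \<open>0 < r\<close> gen_monoid_generator unfolding exp_puiseux_def by auto
    ultimately show "g \<in> atoms (exp_puiseux r N)" unfolding atoms_def by blast
  qed
qed

context tail_atom_sequence
begin

lemma minimal_count_vector:
  assumes "count_lengths x \<noteq> {}"
  obtains c0 M0 where "\<forall>i\<ge>M0. c0 i = 0" "(\<Sum>i<M0. of_nat (c0 i) * atom i) = x"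
    "\<And>n. n \<in> count_lengths x \<Longrightarrow> (\<Sum>i<M0. c0 i) \<le> n"
proof -
  have "(LEAST n. n \<in> count_lengths x) \<in> count_lengths x"
    using assms by (meson LeastI ex_in_conv)
  then obtain c0 M0 where "(LEAST n. n \<in> count_lengths x) = (\<Sum>i<M0. c0 i)"
    "\<forall>i\<ge>M0. c0 i = 0" "(\<Sum>i<M0. of_nat (c0 i) * atom i) = x"
    unfolding count_lengths_def by blast
  then show ?thesis using that Least_le by metis
qed

lemma count_lengths_as_weights:
  assumes "count_lengths x \<noteq> {}"
  obtains z0 l0 where "\<And>i. 0 \<le> z0 i"
    "int ` count_lengths x = (\<lambda>l. l0 + (a - b) * l) ` weights z0"
    "\<And>F. feasible z0 F \<Longrightarrow> 0 \<le> (a - b) * weight trade_weight F"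
proof -
  obtain c0 M0 where c0: "\<forall>i\<ge>M0. c0 i = 0" "(\<Sum>i<M0. of_nat (c0 i) * atom i) = x"
    and min: "\<And>n. n \<in> count_lengths x \<Longrightarrow> (\<Sum>i<M0. c0 i) \<le> n"
    using minimal_count_vector[OF assms] by metis
  have "0 \<le> (a - b) * weight trade_weight F" if F: "feasible (\<lambda>i. int (c0 i)) F" for F
  proof -
    obtain n where "n \<in> count_lengths x" "int n = int (\<Sum>i<M0. c0 i) + (a - b) * weight trade_weight F"
      using weights_in_count_lengths[OF c0 weightsI[OF F]] by auto
    then show ?thesis using min[of n] by linarith
  qed
  then show ?thesis using that[of "\<lambda>i. int (c0 i)"] count_lengths_eq_weights[OF c0] by auto
qed

lemma AAP_count_lengths_if_a_gt_b:
  assumes "b < a"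
  shows "\<exists>B. \<forall>x. count_lengths x \<noteq> {} \<longrightarrow> AAP (a - b) B (int ` count_lengths x)"
proof (intro exI allI impI)
  fix x assume "count_lengths x \<noteq> {}"
  then obtain z0 l0 where z0: "\<And>i. 0 \<le> z0 i"
    and L: "int ` count_lengths x = (\<lambda>l. l0 + (a - b) * l) ` weights z0"
    and sign: "\<And>F. feasible z0 F \<Longrightarrow> 0 \<le> (a - b) * weight trade_weight F"
    by (rule count_lengths_as_weights) auto
  interpret weights_nonneg gap_num gap_den trade_weight p a b z0
    using z0 sign assms by unfold_locales (auto simp: zero_le_mult_iff)
  have "1 \<le> a - b" using assms by simp
  from weights_interval_cases
  show "AAP (a - b) (nat ((a - b) * overshoot_bound)) (int ` count_lengths x)"
  proof
    assume "{0..} \<subseteq> weights z0"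
    then show ?thesis
      unfolding L using \<open>1 \<le> a - b\<close> overshoot_bound_nonneg in_weights_nonneg
      by (intro AAP_affine_ray[where Y = 0]) auto
  next
    assume "\<exists>Y\<ge>0. {0..Y} \<subseteq> weights z0 \<and> weights z0 \<subseteq> {0..Y + overshoot_bound}"
    then obtain Y where "0 \<le> Y" "{0..Y} \<subseteq> weights z0" "weights z0 \<subseteq> {0..Y + overshoot_bound}"
      by blast
    then show ?thesis
      unfolding L by (rule AAP_affine_interval[OF \<open>1 \<le> a - b\<close> overshoot_bound_nonneg])
  qed
qed

lemma AAP_count_lengths_if_a_lt_b:
  assumes "a < b"
  shows "\<exists>B. \<forall>x. count_lengths x \<noteq> {} \<longrightarrow> AAP (b - a) B (int ` count_lengths x)"
proof -
  interpret exchange_system_lt gap_num gap_den trade_weight p a b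
  proof
    show "b \<le> gap_den i" for i
      using power_increasing[OF gap_pos, of b i] b_pos unfolding gap_den_def by simp
  qed (use assms p_pos in auto)
  show ?thesis
  proof (intro exI allI impI)
    fix x assume "count_lengths x \<noteq> {}"
    then obtain z0 l0 where z0: "\<And>i. 0 \<le> z0 i"
      and L: "int ` count_lengths x = (\<lambda>l. l0 + (a - b) * l) ` weights z0"
      and sign: "\<And>F. feasible z0 F \<Longrightarrow> 0 \<le> (a - b) * weight trade_weight F"
      by (rule count_lengths_as_weights) auto
    interpret weights_nonpos gap_num gap_den trade_weight p a b z0
      using z0 sign assms by unfold_locales (auto simp: zero_le_mult_iff)
    have L': "int ` count_lengths x = (\<lambda>l. l0 + (b - a) * l) ` rev_weights"
      unfolding L weights_eq_uminus_rev_weights image_image by (simp add: algebra_simps)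
    have "1 \<le> b - a" using assms by simp
    have "0 \<in> rev_weights" using rev_weightsI[OF rev_feasible_zero] by simp
    from rev_weights_cases
    show "AAP (b - a) (nat ((b - a) * threshold_bound)) (int ` count_lengths x)"
    proof
      assume "\<exists>Y. 0 \<le> Y \<and> Y \<le> threshold_bound \<and> {Y..} \<subseteq> rev_weights"
      then show ?thesis
        unfolding L' using \<open>1 \<le> b - a\<close> in_rev_weights_nonneg
        by (auto intro!: AAP_affine_ray)
    next
      assume "rev_weights \<subseteq> {0..threshold_bound}"
      then show ?thesis
        unfolding L' using \<open>1 \<le> b - a\<close> threshold_bound_nonneg \<open>0 \<in> rev_weights\<close>
        by (intro AAP_affine_interval[where Y = 0]) auto
    qed
  qed
qed

lemma AAP_count_lengths:
  "\<exists>B. \<forall>x. count_lengths x \<noteq> {} \<longrightarrow> AAP \<bar>a - b\<bar> B (int ` count_lengths x)"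
proof -
  have "a \<noteq> b" using a_ge_2 coprime_ab by auto
  then consider "b < a" | "a < b" by linarith
  then show ?thesis
    using AAP_count_lengths_if_a_gt_b AAP_count_lengths_if_a_lt_b by cases (simp_all add: abs_if)
qed

end

lemma AAP_lengths_exp_puiseux_coprime:
  assumes N: "numerical_monoid N" and r: "r = of_int a / of_int b"
    and "2 \<le> a" "2 \<le> b" "coprime a b"
  shows "\<exists>B. \<forall>x\<in>exp_puiseux r N. AAP \<bar>a - b\<bar> B (int ` lengths (exp_puiseux r N) x)"
proof -
  define e where "e = enumerate N"
  have inf: "infinite N" using numerical_monoid_infinite[OF N] .
  obtain p where "1 \<le> p" "\<And>i. p \<le> i \<Longrightarrow> e (Suc i) = Suc (e i)"
    using enumerate_numerical_monoid_tail[OF N] unfolding e_def by blast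
  then interpret tail_atom_sequence a b e p
    using assms(3-5) strict_mono_enumerate[OF inf] by unfold_locales (auto simp: e_def)
  have atom: "atom i = r ^ e i" for i unfolding atom_def r ..
  have "0 < r" "r \<noteq> 1" using r assms(3-5) by (auto simp: divide_eq_1_iff)
  have "inj atom"
  proof (rule injI)
    fix i j assume "atom i = atom j"
    then have "e i = e j" unfolding atom using power_inject_exp'[OF \<open>r \<noteq> 1\<close> \<open>0 < r\<close>] by blast
    then show "i = j" using strict_mono_enumerate[OF inf] by (simp add: e_def strict_mono_eq)
  qed
  have "range atom = (\<lambda>k. r ^ k) ` range e" unfolding atom by (simp add: image_image)
  then have "range atom = (\<lambda>k. r ^ k) ` N" by (simp add: e_def range_enumerate[OF inf])
  then have "atoms (exp_puiseux r N) = range atom"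
    unfolding atoms_exp_puiseux_coprime[OF r assms(3-5)] by auto
  then have lengths: "lengths (exp_puiseux r N) x = count_lengths x" for x
    unfolding count_lengths_def by (rule lengths_eq_counts[OF \<open>inj atom\<close>])
  moreover have "count_lengths x \<noteq> {}" if x: "x \<in> exp_puiseux r N" for x
  proof -
    obtain m where "set_mset m \<subseteq> {r ^ k | k. k \<in> N}" "sum_mset m = x"
      using x unfolding exp_puiseux_def gen_monoid_iff by auto
    then have "size m \<in> lengths (exp_puiseux r N) x"
      unfolding lengths_def atoms_exp_puiseux_coprime[OF r assms(3-5)] by blast
    then show ?thesis using lengths by auto
  qed
  moreover obtain B where "\<forall>x. count_lengths x \<noteq> {} \<longrightarrow> AAP \<bar>a - b\<bar> B (int ` count_lengths x)"
    using AAP_count_lengths by blast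
  ultimately show ?thesis by metis
qed

lemma AAP_lengths_exp_puiseux_of_int:
  assumes "numerical_monoid N" "1 \<le> a" "x \<in> exp_puiseux (of_int a) N"
  shows "AAP d 0 (int ` lengths (exp_puiseux (of_int a) N) x)"
proof -
  have "x \<in> \<nat>" using assms(3) exp_puiseux_of_int_Nats[OF assms(2)] by blast
  then obtain n where "x = of_nat n" by (rule Nats_cases)
  then show ?thesis using lengths_exp_puiseux_of_int[OF assms(1,2)] by (simp add: AAP_singleton)
qed

theorem mainTheorem3:
  fixes r :: rat and N :: "nat set"
  assumes "numerical_monoid N" and "r > 0" and "r \<noteq> 1"
    and "atomic (exp_puiseux r N)"
  shows "\<exists>B::nat. \<forall>x\<in>exp_puiseux r N.
           AAP \<bar>numer r - denom r\<bar> B (int ` lengths (exp_puiseux r N) x)"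
proof -
  obtain a b where q: "quotient_of r = (a, b)" by fastforce
  then have r: "r = of_int a / of_int b" and "0 < b" "coprime a b"
    using quotient_of_div quotient_of_denom_pos quotient_of_coprime by blast+
  have ab: "numer r = a" "denom r = b" using q by (simp_all add: numer_def denom_def)
  have "0 < a" using assms(2) \<open>0 < b\<close> r by (simp add: zero_less_divide_iff)
  consider "b = 1" | "a = 1" "2 \<le> b" | "2 \<le> a" "2 \<le> b" using \<open>0 < a\<close> \<open>0 < b\<close> by linarith
  then show ?thesis
  proof cases
    case 1
    then have "r = of_int a" "1 \<le> a" using r \<open>0 < a\<close> by simp_all
    then show ?thesis using AAP_lengths_exp_puiseux_of_int[OF assms(1)] by blast
  next
    case 2
    then show ?thesis using not_atomic_exp_puiseux_unit_fraction[OF assms(1)] assms(4) r by simp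
  next
    case 3
    then show ?thesis using AAP_lengths_exp_puiseux_coprime[OF assms(1) r _ _ \<open>coprime a b\<close>] ab by simp
  qed
qed

end
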